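(* For all $l,m\in\mathbb{Z}_{\ge0}$ and generic $x,y\in\mathbb{Q}(q)$, the $\mathcal{U}(\epsilon)$-module $\mathcal{W}_{l,\epsilon}(x)\otimes\mathcal{W}_{m,\epsilon}(y)$ is irreducible.
   Context: Fix an integer $n\ge 4$ and $\epsilon=(\epsilon_1,\dots,\epsilon_n)\in\{0,1\}^n$. Put $\mathbb{I}=\{1,\dots,n\}$, $I=\{0,1,\dots,n-1\}$; indices in $I$ are read modulo $n$, and the index $0$ is identified with $n$ when regarded as an element of $\mathbb{I}$. Let $P=\bigoplus_{i\in\mathbb{I}}\mathbb{Z}\delta_i$, $\alpha_i=\delta_i-\delta_{i+1}$ ($i\in I$), and let $\langle\alpha_i,\delta_j^\vee\rangle$ denote the coefficient of $\delta_j$ in $\alpha_i$. Let $I_{\rm even}=\{i\in I:\epsilon_i=\epsilon_{i+1}\}$, $I_{\rm odd}=I\setminus I_{\rm even}$. Let $q$ be an indeterminate, $[k]=(q^k-q^{-k})/(q-q^{-1})$, $[2]=q+q^{-1}$, and $q_j=q$ if $\epsilon_j=0$, $q_j=-q^{-1}$ if $\epsilon_j=1$. The generalized quantum group $\mathcal{U}(\epsilon)$ is the $\mathbb{Q}(q)$-algebra generated by pairwise commuting invertible elements $\omega_j$ ($j\in\mathbb{I}$) and $e_i,f_i$ ($i\in I$) with relations: $\omega_je_i\omega_j^{-1}=q_j^{\langle\alpha_i,\delta_j^\vee\rangle}e_i$, $\omega_jf_i\omega_j^{-1}=q_j^{-\langle\alpha_i,\delta_j^\vee\rangle}f_i$;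 $e_if_j-f_je_i=\delta_{ij}(k_i-k_i^{-1})/(q-q^{-1})$ where $k_i=\omega_i\omega_{i+1}^{-1}$; $e_i^2=f_i^2=0$ for $i\in I_{\rm odd}$; $e_ie_j=e_je_i$, $f_if_j=f_jf_i$ if $i\ne j$ are not cyclically adjacent; $e_i^2e_j-(-1)^{\epsilon_i}[2]e_ie_je_i+e_je_i^2=0$ and likewise for $f$ if $i\in I_{\rm even}$, $j=i\pm1$; and for $i\in I_{\rm odd}$: $e_ie_{i-1}e_ie_{i+1}-e_ie_{i+1}e_ie_{i-1}+e_{i+1}e_ie_{i-1}e_i-e_{i-1}e_ie_{i+1}e_i+(-1)^{\epsilon_i}[2]e_ie_{i-1}e_{i+1}e_i=0$ and the same with $f$. Tensor products use $\Delta(\omega_j)=\omega_j\otimes\omega_j$, $\Delta(e_i)=e_i\otimes1+k_i^{-1}\otimes e_i$, $\Delta(f_i)=f_i\otimes k_i+1\otimes f_i$. Let $\mathbb{Z}^n_+(\epsilon)$ be the set of $\mathbf{m}=(m_1,\dots,m_n)$ with $m_i\in\mathbb{Z}_{\ge0}$ if $\epsilon_i=0$ and $m_i\in\{0,1\}$ if $\epsilon_i=1$; $|\mathbf m|=\sum m_i$; $\mathbf{e}_i$ is the $i$-th unit vector ($\mathbf e_0=\mathbf e_n$). For $s\in\mathbb{Z}_{\ge0}$ and $x\in\mathbb{Q}(q)^\times$, $\mathcal{W}_{s,\epsilon}(x)$ is the $\mathcal{U}(\epsilon)$-module with basis $\{|\mathbf m\rangle:|\mathbf m|=s\}$ and $e_i|\mathbf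 m\rangle=x^{\delta_{i0}}q^{m_{i+1}-m_i-1}[m_{i+1}]|\mathbf m+\mathbf e_i-\mathbf e_{i+1}\rangle$ if $\mathbf m+\mathbf e_i-\mathbf e_{i+1}\in\mathbb{Z}^n_+(\epsilon)$ and $0$ otherwise; $f_i|\mathbf m\rangle=x^{-\delta_{i0}}q^{m_i-m_{i+1}-1}[m_i]|\mathbf m-\mathbf e_i+\mathbf e_{i+1}\rangle$ if $\mathbf m-\mathbf e_i+\mathbf e_{i+1}\in\mathbb{Z}^n_+(\epsilon)$ and $0$ otherwise; $\omega_j|\mathbf m\rangle=q_j^{m_j}|\mathbf m\rangle$. *)

theory Defs
  imports "HOL-Computational_Algebra.Polynomial" "HOL-Computational_Algebra.Fraction_Field"
begin

type_synonym K = "rat poly fract"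

definition qq :: K where "qq = Fract [:0, 1:] 1"

definition qint :: "int \<Rightarrow> K" where
  "qint k = (qq powi k - qq powi (-k)) / (qq - inverse qq)"

text \<open>eps j = True means epsilon_j = 1, eps j = False means epsilon_j = 0.\<close>
definition qj :: "(nat \<Rightarrow> bool) \<Rightarrow> nat \<Rightarrow> K" where
  "qj eps j = (if eps j then - inverse qq else qq)"

definition idx :: "nat \<Rightarrow> nat \<Rightarrow> nat" where
  "idx n i = (if i mod n = 0 then n else i mod n)"

text \<open>Z^n_+(epsilon): tuples (m_1,...,m_n) encoded as functions vanishing outside {1..n}.\<close>
definition Zplus :: "nat \<Rightarrow> (nat \<Rightarrow> bool) \<Rightarrow> (nat \<Rightarrow> nat) set" where
  "Zplus n eps = {m. (\<forall>i. i \<notin> {1..n} \<longrightarrow> m i = 0) \<and> (\<forall>i\<in>{1..n}. eps i \<longrightarrow> m i \<le> 1)}"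

definition Wbasis :: "nat \<Rightarrow> (nat \<Rightarrow> bool) \<Rightarrow> nat \<Rightarrow> (nat \<Rightarrow> nat) set" where
  "Wbasis n eps s = {m \<in> Zplus n eps. (\<Sum>i=1..n. m i) = s}"

text \<open>m + e_i - e_(i+1) and m - e_i + e_(i+1) (the guards below ensure no truncation).\<close>
definition mv_e :: "nat \<Rightarrow> nat \<Rightarrow> (nat \<Rightarrow> nat) \<Rightarrow> (nat \<Rightarrow> nat)" where
  "mv_e n i b = b(idx n i := b (idx n i) + 1, idx n (i+1) := b (idx n (i+1)) - 1)"

definition mv_f :: "nat \<Rightarrow> nat \<Rightarrow> (nat \<Rightarrow> nat) \<Rightarrow> (nat \<Rightarrow> nat)" where
  "mv_f n i b = b(idx n i := b (idx n i) - 1, idx n (i+1) := b (idx n (i+1)) + 1)"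

text \<open>Matrices: M b' b is the coefficient of |b'> in X|b>.  Action of e_i on W_{s,eps}(x).\<close>
definition Emat :: "nat \<Rightarrow> (nat \<Rightarrow> bool) \<Rightarrow> nat \<Rightarrow> K \<Rightarrow> nat \<Rightarrow> (nat \<Rightarrow> nat) \<Rightarrow> (nat \<Rightarrow> nat) \<Rightarrow> K" where
  "Emat n eps s x i b' b =
    (if b \<in> Wbasis n eps s \<and> 1 \<le> b (idx n (i+1)) \<and> mv_e n i b \<in> Zplus n eps \<and> b' = mv_e n i b
     then (if i = 0 then x else 1)
          * qq powi (int (b (idx n (i+1))) - int (b (idx n i)) - 1)
          * qint (int (b (idx n (i+1))))
     else 0)"

definition Fmat :: "nat \<Rightarrow> (nat \<Rightarrow> bool) \<Rightarrow> nat \<Rightarrow> K \<Rightarrow> nat \<Rightarrow> (nat \<Rightarrow> nat) \<Rightarrow> (nat \<Rightarrow> nat) \<Rightarrow> K" where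
  "Fmat n eps s x i b' b =
    (if b \<in> Wbasis n eps s \<and> 1 \<le> b (idx n i) \<and> mv_f n i b \<in> Zplus n eps \<and> b' = mv_f n i b
     then (if i = 0 then inverse x else 1)
          * qq powi (int (b (idx n i)) - int (b (idx n (i+1))) - 1)
          * qint (int (b (idx n i)))
     else 0)"

text \<open>Eigenvalue of omega_j on |b>, and of k_i = omega_i omega_(i+1)^(-1).\<close>
definition omval :: "(nat \<Rightarrow> bool) \<Rightarrow> nat \<Rightarrow> (nat \<Rightarrow> nat) \<Rightarrow> K" where
  "omval eps j b = qj eps j ^ b j"

definition kval :: "nat \<Rightarrow> (nat \<Rightarrow> bool) \<Rightarrow> nat \<Rightarrow> (nat \<Rightarrow> nat) \<Rightarrow> K" where
  "kval n eps i b = omval eps (idx n i) b * inverse (omval eps (idx n (i+1)) b)"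

text \<open>Tensor product actions via Delta(e_i) = e_i (x) 1 + k_i^(-1) (x) e_i,
  Delta(f_i) = f_i (x) k_i + 1 (x) f_i, Delta(omega_j) = omega_j (x) omega_j.\<close>
type_synonym tb = "(nat \<Rightarrow> nat) \<times> (nat \<Rightarrow> nat)"

definition TEmat :: "nat \<Rightarrow> (nat \<Rightarrow> bool) \<Rightarrow> nat \<Rightarrow> nat \<Rightarrow> K \<Rightarrow> K \<Rightarrow> nat \<Rightarrow> tb \<Rightarrow> tb \<Rightarrow> K" where
  "TEmat n eps l m x y i bb' bb =
     Emat n eps l x i (fst bb') (fst bb) * (if snd bb' = snd bb then 1 else 0)
   + (if fst bb' = fst bb then inverse (kval n eps i (fst bb)) else 0) * Emat n eps m y i (snd bb') (snd bb)"

definition TFmat :: "nat \<Rightarrow> (nat \<Rightarrow> bool) \<Rightarrow> nat \<Rightarrow> nat \<Rightarrow> K \<Rightarrow> K \<Rightarrow> nat \<Rightarrow> tb \<Rightarrow> tb \<Rightarrow> K" where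
  "TFmat n eps l m x y i bb' bb =
     Fmat n eps l x i (fst bb') (fst bb) * (if snd bb' = snd bb then kval n eps i (snd bb) else 0)
   + (if fst bb' = fst bb then 1 else 0) * Fmat n eps m y i (snd bb') (snd bb)"

definition TOmat :: "(nat \<Rightarrow> bool) \<Rightarrow> nat \<Rightarrow> tb \<Rightarrow> tb \<Rightarrow> K" where
  "TOmat eps j bb' bb = (if bb' = bb then omval eps j (fst bb) * omval eps j (snd bb) else 0)"

definition TOinvmat :: "(nat \<Rightarrow> bool) \<Rightarrow> nat \<Rightarrow> tb \<Rightarrow> tb \<Rightarrow> K" where
  "TOinvmat eps j bb' bb = (if bb' = bb then inverse (omval eps j (fst bb) * omval eps j (snd bb)) else 0)"

definition tensor_gens :: "nat \<Rightarrow> (nat \<Rightarrow> bool) \<Rightarrow> nat \<Rightarrow> nat \<Rightarrow> K \<Rightarrow> K \<Rightarrow> (tb \<Rightarrow> tb \<Rightarrow> K) set" where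
  "tensor_gens n eps l m x y =
     {TEmat n eps l m x y i | i. i < n} \<union> {TFmat n eps l m x y i | i. i < n}
   \<union> {TOmat eps j | j. j \<in> {1..n}} \<union> {TOinvmat eps j | j. j \<in> {1..n}}"

definition Vspace :: "'b set \<Rightarrow> ('b \<Rightarrow> K) set" where
  "Vspace B = {v. \<forall>b. b \<notin> B \<longrightarrow> v b = 0}"

definition mat_apply :: "'b set \<Rightarrow> ('b \<Rightarrow> 'b \<Rightarrow> K) \<Rightarrow> ('b \<Rightarrow> K) \<Rightarrow> ('b \<Rightarrow> K)" where
  "mat_apply B M v = (\<lambda>b'. if b' \<in> B then (\<Sum>b\<in>B. M b' b * v b) else 0)"

definition invariant_subspace :: "'b set \<Rightarrow> ('b \<Rightarrow> 'b \<Rightarrow> K) set \<Rightarrow> ('b \<Rightarrow> K) set \<Rightarrow> bool" where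
  "invariant_subspace B Ms S \<longleftrightarrow>
     S \<subseteq> Vspace B \<and> (\<lambda>_. 0) \<in> S \<and> (\<forall>u\<in>S. \<forall>v\<in>S. (\<lambda>b. u b + v b) \<in> S)
     \<and> (\<forall>c. \<forall>u\<in>S. (\<lambda>b. c * u b) \<in> S) \<and> (\<forall>M\<in>Ms. \<forall>u\<in>S. mat_apply B M u \<in> S)"

definition irreducible_mod :: "'b set \<Rightarrow> ('b \<Rightarrow> 'b \<Rightarrow> K) set \<Rightarrow> bool" where
  "irreducible_mod B Ms \<longleftrightarrow> (\<exists>v\<in>Vspace B. v \<noteq> (\<lambda>_. 0))
     \<and> (\<forall>S. invariant_subspace B Ms S \<longrightarrow> S = {\<lambda>_. 0} \<or> S = Vspace B)"

end

theory Submission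
  imports Defs "Subresultants.More_Homomorphisms"
begin

text \<open>
  Words in the generators act on \<open>W\<^sub>l(x) \<otimes> W\<^sub>m(y)\<close> by matrices whose entries, once \<open>f\<^sub>0\<close> is
  rescaled by \<open>x y\<close>, are polynomials in \<open>x\<close> and \<open>y\<close>. For every pair \<open>(t', t)\<close> of basis vectors we
  fix a linear combination of words; the determinant \<open>P\<close> of the square matrix formed by all entries
  of their actions is the polynomial of the theorem. Where \<open>P(x, y) \<noteq> 0\<close> these actions span all
  matrices, so every matrix unit preserves an invariant subspace, which is therefore trivial.

  \<open>P \<noteq> 0\<close> is seen by the degeneration \<open>x = 1\<close>, \<open>y = s\<^sup>n\<close>: after conjugation by powers of \<open>s\<close>
  given by the weight \<open>\<Sum> (p - 1) b\<^sub>p\<close> of the first factor, at \<open>s = 0\<close> every \<open>e\<^sub>i\<close> acts on the first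
  factor only and every \<open>f\<^sub>i\<close> on the second. On a single \<open>W\<^sub>s\<close> the \<open>e\<^sub>i\<close> (and likewise the \<open>f\<^sub>i\<close>)
  move one unit between cyclically adjacent sites, up to nonzero scalars. These moves connect all
  basis vectors, closed walks act diagonally and separate basis vectors, and hence words in the
  \<open>e\<^sub>i\<close> (resp. \<open>f\<^sub>i\<close>) produce every matrix unit of \<open>W\<^sub>l\<close> (resp. \<open>W\<^sub>m\<close>). Taking for the chosen
  combinations the products of these, the degenerate matrix is the identity at \<open>s = 0\<close>.
\<close>

section \<open>Matrices indexed by a finite set\<close>

definition mat_mul :: "'i set \<Rightarrow> ('i \<Rightarrow> 'i \<Rightarrow> 'a::comm_semiring_1) \<Rightarrow> ('i \<Rightarrow> 'i \<Rightarrow> 'a) \<Rightarrow> 'i \<Rightarrow> 'i \<Rightarrow> 'a" where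
  "mat_mul I A B = (\<lambda>i k. \<Sum>j\<in>I. A i j * B j k)"

definition mat_one :: "'i set \<Rightarrow> 'i \<Rightarrow> 'i \<Rightarrow> 'a::comm_semiring_1" where
  "mat_one I = (\<lambda>i k. if i = k \<and> k \<in> I then 1 else 0)"

definition mat_unit :: "'i \<Rightarrow> 'i \<Rightarrow> 'i \<Rightarrow> 'i \<Rightarrow> 'a::zero_neq_one" where
  "mat_unit t' t = (\<lambda>i k. if i = t' \<and> k = t then 1 else 0)"

definition diagonal_on :: "'i set \<Rightarrow> ('i \<Rightarrow> 'i \<Rightarrow> 'a::zero) \<Rightarrow> bool" where
  "diagonal_on I D \<longleftrightarrow> (\<forall>i\<in>I. \<forall>k\<in>I. D i k \<noteq> 0 \<longrightarrow> i = k)"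

text \<open>A word is read from left to right as a sequence of actions, so its matrix is the
  product of the letters' matrices in reverse order.\<close>

fun word_mat :: "'i set \<Rightarrow> ('l \<Rightarrow> 'i \<Rightarrow> 'i \<Rightarrow> 'a::comm_semiring_1) \<Rightarrow> 'l list \<Rightarrow> 'i \<Rightarrow> 'i \<Rightarrow> 'a" where
  "word_mat I M [] = mat_one I"
| "word_mat I M (a # w) = mat_mul I (word_mat I M w) (M a)"

definition comb_mat ::
  "'i set \<Rightarrow> ('l \<Rightarrow> 'i \<Rightarrow> 'i \<Rightarrow> 'a::comm_semiring_1) \<Rightarrow> ('c \<Rightarrow> 'a) \<Rightarrow> ('l list \<times> 'c) list \<Rightarrow> 'i \<Rightarrow> 'i \<Rightarrow> 'a" where
  "comb_mat I M emb C = (\<lambda>i k. \<Sum>(w, c)\<leftarrow>C. emb c * word_mat I M w i k)"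

definition comb_mult :: "('l list \<times> 'a::times) list \<Rightarrow> ('l list \<times> 'a) list \<Rightarrow> ('l list \<times> 'a) list" where
  "comb_mult C1 C2 = concat (map (\<lambda>(w1, c1). map (\<lambda>(w2, c2). (w2 @ w1, c1 * c2)) C2) C1)"

lemma sum_list_sum_swap: "(\<Sum>x\<leftarrow>xs. \<Sum>j\<in>A. f x j) = (\<Sum>j\<in>A. \<Sum>x\<leftarrow>xs. f x j)"
  by (induction xs) (simp_all add: sum.distrib)

lemma sum_list_concat_map: "(\<Sum>x\<leftarrow>concat xss. f x) = (\<Sum>xs\<leftarrow>xss. \<Sum>x\<leftarrow>xs. f x)"
  by (induction xss) simp_all

lemma mat_mul_assoc: "finite I \<Longrightarrow> mat_mul I (mat_mul I A B) C = mat_mul I A (mat_mul I B C)"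
  unfolding mat_mul_def
  by (auto simp: fun_eq_iff sum_distrib_left sum_distrib_right mult.assoc intro: sum.swap)

lemma mat_mul_one_right:
  assumes "finite I" "k \<in> I"
  shows "mat_mul I A (mat_one I) i k = A i k"
proof -
  have "mat_mul I A (mat_one I) i k = (\<Sum>j\<in>I. if j = k then A i k else 0)"
    unfolding mat_mul_def mat_one_def by (intro sum.cong) auto
  then show ?thesis
    using assms by simp
qed

lemma mat_mul_diagonal:
  assumes "finite I" "diagonal_on I D1" "diagonal_on I D2" "i \<in> I" "k \<in> I"
  shows "mat_mul I D1 D2 i k = (if i = k then D1 i i * D2 i i else 0)"
proof -
  have "mat_mul I D1 D2 i k = (\<Sum>j\<in>I. if j = i then (if i = k then D1 i i * D2 i i else 0) else 0)"
    unfolding mat_mul_def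
  proof (intro sum.cong refl)
    fix j assume "j \<in> I"
    then have "D1 i j = 0 \<or> i = j" "D2 j k = 0 \<or> j = k"
      using assms(2-5) unfolding diagonal_on_def by blast+
    then show "D1 i j * D2 j k = (if j = i then (if i = k then D1 i i * D2 i i else 0) else 0)"
      by auto
  qed
  then show ?thesis
    using assms(1,4) by simp
qed

lemma diagonal_on_mat_mul:
  assumes "finite I" "diagonal_on I D1" "diagonal_on I D2"
  shows "diagonal_on I (mat_mul I D1 D2)"
  unfolding diagonal_on_def
proof (intro ballI impI)
  fix i k assume "i \<in> I" "k \<in> I" "mat_mul I D1 D2 i k \<noteq> 0"
  then show "i = k"
    using mat_mul_diagonal[OF assms] by (metis (full_types))
qed

lemma word_mat_append:
  "finite I \<Longrightarrow> k \<in> I \<Longrightarrow> word_mat I M (w1 @ w2) i k = mat_mul I (word_mat I M w2) (word_mat I M w1) i k"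
proof (induction w1 arbitrary: i k)
  case Nil
  then show ?case
    by (simp add: mat_mul_one_right)
next
  case (Cons a w1)
  have "word_mat I M ((a # w1) @ w2) i k = (\<Sum>j\<in>I. word_mat I M (w1 @ w2) i j * M a j k)"
    by (simp add: mat_mul_def)
  also have "\<dots> = (\<Sum>j\<in>I. mat_mul I (word_mat I M w2) (word_mat I M w1) i j * M a j k)"
    using Cons.IH[OF Cons.prems(1)] by (intro sum.cong) simp_all
  also have "\<dots> = mat_mul I (mat_mul I (word_mat I M w2) (word_mat I M w1)) (M a) i k"
    by (simp add: mat_mul_def[of I _ "M a"])
  also have "\<dots> = mat_mul I (word_mat I M w2) (word_mat I M (a # w1)) i k"
    by (simp add: mat_mul_assoc[OF Cons.prems(1)])
  finally show ?case .
qed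

lemma word_mat_map: "word_mat I M (map f w) = word_mat I (\<lambda>a. M (f a)) w"
  by (induction w) simp_all

lemma comb_mat_mult:
  assumes "finite I" "k \<in> I"
  shows "comb_mat I M id (comb_mult C1 C2) i k = mat_mul I (comb_mat I M id C1) (comb_mat I M id C2) i k"
proof -
  let ?W = "word_mat I M"
  have "mat_mul I (comb_mat I M id C1) (comb_mat I M id C2) i k
      = (\<Sum>j\<in>I. \<Sum>p\<leftarrow>C1. \<Sum>p'\<leftarrow>C2. (snd p * ?W (fst p) i j) * (snd p' * ?W (fst p') j k))"
    unfolding mat_mul_def comb_mat_def case_prod_unfold id_def sum_list_mult_const[symmetric]
    unfolding sum_list_const_mult[symmetric] ..
  also have "\<dots> = (\<Sum>j\<in>I. \<Sum>p\<leftarrow>C1. \<Sum>p'\<leftarrow>C2. (snd p * snd p') * (?W (fst p) i j * ?W (fst p') j k))"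
    by (simp add: ac_simps)
  also have "\<dots> = (\<Sum>p\<leftarrow>C1. \<Sum>p'\<leftarrow>C2. (snd p * snd p') * ?W (fst p' @ fst p) i k)"
    by (simp add: sum_list_sum_swap word_mat_append[OF assms] mat_mul_def sum_distrib_left)
  also have "\<dots> = comb_mat I M id (comb_mult C1 C2) i k"
    by (simp add: comb_mat_def comb_mult_def sum_list_concat_map case_prod_unfold comp_def)
  finally show ?thesis ..
qed

lemma (in comm_ring_hom) hom_word_mat: "hom (word_mat I M w i k) = word_mat I (\<lambda>a i k. hom (M a i k)) w i k"
  by (induction w arbitrary: i k) (simp_all add: mat_one_def mat_mul_def hom_distribs)

lemma (in comm_ring_hom) hom_comb_mat:
  "hom (comb_mat I M emb C i k) = comb_mat I (\<lambda>a i k. hom (M a i k)) (\<lambda>c. hom (emb c)) C i k"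
  by (simp add: comb_mat_def hom_sum_list case_prod_unfold comp_def hom_distribs hom_word_mat)

lemma word_mat_kron_id_right:
  assumes "finite J"
  shows "snd u \<in> J \<Longrightarrow> word_mat (I \<times> J) (\<lambda>a u' u. A a (fst u') (fst u) * of_bool (snd u' = snd u)) w u' u
    = word_mat I A w (fst u') (fst u) * of_bool (snd u' = snd u)"
proof (induction w arbitrary: u)
  case Nil
  then show ?case
    by (auto simp: mat_one_def prod_eq_iff mem_Times_iff)
next
  case (Cons a w)
  have "word_mat (I \<times> J) (\<lambda>a u' u. A a (fst u') (fst u) * of_bool (snd u' = snd u)) (a # w) u' u
      = (\<Sum>v\<in>I \<times> J. word_mat I A w (fst u') (fst v) * of_bool (snd u' = snd v)
          * (A a (fst v) (fst u) * of_bool (snd v = snd u)))"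
    unfolding word_mat.simps mat_mul_def by (intro sum.cong refl) (simp add: Cons.IH mem_Times_iff)
  also have "\<dots> = (\<Sum>v1\<in>I. \<Sum>v2\<in>J. if v2 = snd u then word_mat I A w (fst u') v1 * A a v1 (fst u) * of_bool (snd u' = snd u) else 0)"
    unfolding sum.cartesian_product' by (intro sum.cong refl) auto
  also have "\<dots> = word_mat I A (a # w) (fst u') (fst u) * of_bool (snd u' = snd u)"
    using assms Cons.prems by (simp add: mat_mul_def sum_distrib_right)
  finally show ?case .
qed

lemma word_mat_kron_id_left:
  assumes "finite I"
  shows "fst u \<in> I \<Longrightarrow> word_mat (I \<times> J) (\<lambda>a u' u. of_bool (fst u' = fst u) * A a (snd u') (snd u)) w u' u
    = of_bool (fst u' = fst u) * word_mat J A w (snd u') (snd u)"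
proof (induction w arbitrary: u)
  case Nil
  then show ?case
    by (auto simp: mat_one_def prod_eq_iff mem_Times_iff)
next
  case (Cons a w)
  have "word_mat (I \<times> J) (\<lambda>a u' u. of_bool (fst u' = fst u) * A a (snd u') (snd u)) (a # w) u' u
      = (\<Sum>v\<in>I \<times> J. of_bool (fst u' = fst v) * word_mat J A w (snd u') (snd v)
          * (of_bool (fst v = fst u) * A a (snd v) (snd u)))"
    unfolding word_mat.simps mat_mul_def by (intro sum.cong refl) (simp add: Cons.IH mem_Times_iff)
  also have "\<dots> = (\<Sum>v1\<in>I. if v1 = fst u then of_bool (fst u' = fst u) * (\<Sum>v2\<in>J. word_mat J A w (snd u') v2 * A a v2 (snd u)) else 0)"
    unfolding sum.cartesian_product' by (intro sum.cong refl) (auto simp: sum_distrib_left)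
  also have "\<dots> = of_bool (fst u' = fst u) * word_mat J A (a # w) (snd u') (snd u)"
    using assms Cons.prems by (simp add: mat_mul_def)
  finally show ?case .
qed

lemma mat_mul_kron:
  assumes "finite I" "finite J" "fst u' \<in> I" "snd u \<in> J"
  shows "mat_mul (I \<times> J) (\<lambda>u' u. of_bool (fst u' = fst u) * F (snd u') (snd u))
      (\<lambda>u' u. E (fst u') (fst u) * of_bool (snd u' = snd u)) u' u = E (fst u') (fst u) * F (snd u') (snd u)"
proof -
  have "mat_mul (I \<times> J) (\<lambda>u' u. of_bool (fst u' = fst u) * F (snd u') (snd u))
      (\<lambda>u' u. E (fst u') (fst u) * of_bool (snd u' = snd u)) u' u
    = (\<Sum>v1\<in>I. if v1 = fst u' then (\<Sum>v2\<in>J. if v2 = snd u then E (fst u') (fst u) * F (snd u') (snd u) else 0) else 0)"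
    unfolding mat_mul_def sum.cartesian_product' by (intro sum.cong refl) (auto intro!: sum.cong simp: mult.commute)
  then show ?thesis
    using assms by simp
qed

section \<open>Invariant subspaces\<close>

definition preserves :: "'b set \<Rightarrow> ('b \<Rightarrow> K) set \<Rightarrow> ('b \<Rightarrow> 'b \<Rightarrow> K) \<Rightarrow> bool" where
  "preserves B S Z \<longleftrightarrow> (\<forall>v\<in>S. mat_apply B Z v \<in> S)"

context
  fixes B :: "'b set" and Ms and S :: "('b \<Rightarrow> K) set"
  assumes inv: "invariant_subspace B Ms S" and fin: "finite B"
begin

lemma invariant_subspace_zero: "(\<lambda>_. 0) \<in> S"
  and invariant_subspace_add: "u \<in> S \<Longrightarrow> v \<in> S \<Longrightarrow> (\<lambda>b. u b + v b) \<in> S"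
  and invariant_subspace_scale: "u \<in> S \<Longrightarrow> (\<lambda>b. c * u b) \<in> S"
  using inv unfolding invariant_subspace_def by auto

lemma invariant_subspace_sum: "finite A \<Longrightarrow> (\<And>j. j \<in> A \<Longrightarrow> f j \<in> S) \<Longrightarrow> (\<lambda>b. \<Sum>j\<in>A. f j b) \<in> S"
  by (induction A rule: finite_induct) (simp_all add: invariant_subspace_zero invariant_subspace_add)

lemma preserves_generator: "M \<in> Ms \<Longrightarrow> preserves B S M"
  using inv unfolding invariant_subspace_def preserves_def by blast

lemma preserves_scale: "preserves B S Z \<Longrightarrow> preserves B S (\<lambda>i k. c * Z i k)"
proof -
  have "mat_apply B (\<lambda>i k. c * Z i k) v = (\<lambda>b. c * mat_apply B Z v b)" for v
    by (auto simp: mat_apply_def sum_distrib_left mult.assoc)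
  then show "preserves B S Z \<Longrightarrow> preserves B S (\<lambda>i k. c * Z i k)"
    using invariant_subspace_scale by (simp add: preserves_def)
qed

lemma preserves_sum:
  assumes "finite A" "\<And>x. x \<in> A \<Longrightarrow> preserves B S (Z x)"
  shows "preserves B S (\<lambda>i k. \<Sum>x\<in>A. Z x i k)"
  unfolding preserves_def
proof
  fix v assume "v \<in> S"
  have "mat_apply B (\<lambda>i k. \<Sum>x\<in>A. Z x i k) v = (\<lambda>b. \<Sum>x\<in>A. mat_apply B (Z x) v b)"
  proof
    fix b
    show "mat_apply B (\<lambda>i k. \<Sum>x\<in>A. Z x i k) v b = (\<Sum>x\<in>A. mat_apply B (Z x) v b)"
      unfolding mat_apply_def by (simp add: sum_distrib_right sum.swap[of _ B A])
  qed
  moreover have "(\<lambda>b. \<Sum>x\<in>A. mat_apply B (Z x) v b) \<in> S"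
    using assms \<open>v \<in> S\<close> by (intro invariant_subspace_sum) (auto simp: preserves_def)
  ultimately show "mat_apply B (\<lambda>i k. \<Sum>x\<in>A. Z x i k) v \<in> S"
    by simp
qed

lemma preserves_sum_list:
  "(\<And>x. x \<in> set xs \<Longrightarrow> preserves B S (Z x)) \<Longrightarrow> preserves B S (\<lambda>i k. \<Sum>x\<leftarrow>xs. Z x i k)"
  using preserves_sum[of "{..<length xs}" "\<lambda>j. Z (xs ! j)"]
  by (simp add: sum_list_sum_nth atLeast0LessThan)

lemma preserves_mat_mul: "preserves B S Z1 \<Longrightarrow> preserves B S Z2 \<Longrightarrow> preserves B S (mat_mul B Z1 Z2)"
proof -
  have "mat_apply B (mat_mul B Z1 Z2) v = mat_apply B Z1 (mat_apply B Z2 v)" for v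
    unfolding mat_apply_def mat_mul_def
    by (auto simp: fun_eq_iff sum_distrib_left sum_distrib_right mult_ac intro: sum.swap)
  then show "preserves B S Z1 \<Longrightarrow> preserves B S Z2 \<Longrightarrow> preserves B S (mat_mul B Z1 Z2)"
    by (simp add: preserves_def)
qed

lemma preserves_mat_one: "preserves B S (mat_one B)"
proof -
  have "mat_apply B (mat_one B) v = v" if "v \<in> S" for v
  proof
    fix b
    have "v \<in> Vspace B"
      using inv that unfolding invariant_subspace_def by blast
    moreover have "(\<Sum>b'\<in>B. mat_one B b b' * v b') = (\<Sum>b'\<in>B. if b' = b then v b else 0)"
      by (intro sum.cong) (auto simp: mat_one_def)
    ultimately show "mat_apply B (mat_one B) v b = v b"
      using fin by (simp add: mat_apply_def Vspace_def)
  qed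
  then show ?thesis
    by (simp add: preserves_def)
qed

lemma preserves_word_mat: "(\<And>a. a \<in> set w \<Longrightarrow> preserves B S (M a)) \<Longrightarrow> preserves B S (word_mat B M w)"
  by (induction w) (auto intro: preserves_mat_one preserves_mat_mul)

lemma preserves_comb_mat:
  "(\<And>w c a. (w, c) \<in> set C \<Longrightarrow> a \<in> set w \<Longrightarrow> preserves B S (M a)) \<Longrightarrow> preserves B S (comb_mat B M id C)"
  unfolding comb_mat_def case_prod_unfold
  by (rule preserves_sum_list) (auto intro!: preserves_scale preserves_word_mat)

lemma mat_apply_mat_unit:
  assumes "t \<in> B" "\<forall>u'\<in>B. \<forall>u\<in>B. Z u' u = mat_unit t' t u' u" "t' \<in> B"
  shows "mat_apply B Z v = (\<lambda>b. v t * of_bool (b = t'))"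
proof
  fix b
  show "mat_apply B Z v b = v t * of_bool (b = t')"
  proof (cases "b \<in> B")
    case True
    then have "(\<Sum>u\<in>B. Z b u * v u) = (\<Sum>u\<in>B. if u = t then v t * of_bool (b = t') else 0)"
      using assms(2) by (intro sum.cong) (auto simp: mat_unit_def)
    then show ?thesis
      using True assms(1) fin by (simp add: mat_apply_def)
  qed (use assms(3) in \<open>auto simp: mat_apply_def\<close>)
qed

lemma Vspace_subset_if_basis:
  assumes "\<And>t. t \<in> B \<Longrightarrow> (\<lambda>b. of_bool (b = t)) \<in> S"
  shows "Vspace B \<subseteq> S"
proof
  fix u assume u: "u \<in> Vspace B"
  have "(\<lambda>b. \<Sum>t\<in>B. u t * of_bool (b = t)) \<in> S"
    using assms invariant_subspace_scale by (intro invariant_subspace_sum[OF fin]) blast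
  moreover have "(\<lambda>b. \<Sum>t\<in>B. u t * of_bool (b = t)) = u"
  proof
    fix b
    have "(\<Sum>t\<in>B. u t * of_bool (b = t)) = (\<Sum>t\<in>B. if t = b then u b else 0)"
      by (intro sum.cong) auto
    then show "(\<Sum>t\<in>B. u t * of_bool (b = t)) = u b"
      using u fin by (simp add: Vspace_def)
  qed
  ultimately show "u \<in> S"
    by simp
qed

lemma invariant_subspace_trivial_if_units:
  assumes units: "\<And>t t'. t \<in> B \<Longrightarrow> t' \<in> B \<Longrightarrow>
      \<exists>Z. preserves B S Z \<and> (\<forall>u'\<in>B. \<forall>u\<in>B. Z u' u = mat_unit t' t u' u)"
  shows "S = {\<lambda>_. 0} \<or> S = Vspace B"
proof (cases "S \<subseteq> {\<lambda>_. 0}")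
  case True
  then show ?thesis
    using invariant_subspace_zero by blast
next
  case False
  then obtain v t where v: "v \<in> S" "v t \<noteq> 0"
    by (auto simp: fun_eq_iff)
  have SV: "S \<subseteq> Vspace B"
    using inv unfolding invariant_subspace_def by blast
  then have t: "t \<in> B"
    using v unfolding Vspace_def by blast
  have "(\<lambda>b. of_bool (b = t')) \<in> S" if t': "t' \<in> B" for t'
  proof -
    obtain Z where Z: "preserves B S Z" "\<forall>u'\<in>B. \<forall>u\<in>B. Z u' u = mat_unit t' t u' u"
      using units[OF t t'] by blast
    then have "(\<lambda>b. inverse (v t) * (v t * of_bool (b = t'))) \<in> S"
      using mat_apply_mat_unit[OF t Z(2) t'] v(1) invariant_subspace_scale unfolding preserves_def by metis
    then show ?thesis
      using v(2) by (simp add: mult.assoc[symmetric])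
  qed
  then show ?thesis
    using Vspace_subset_if_basis SV by blast
qed

end

section \<open>Determinants\<close>

lemma det_diagonal_scaling:
  fixes A N :: "'a::comm_ring_1 mat"
  assumes A: "A \<in> carrier_mat k k" and N: "N \<in> carrier_mat k k"
    and AN: "\<forall>r<k. \<forall>j<k. f r * A $$ (r, j) = N $$ (r, j) * g j"
  shows "(\<Prod>r<k. f r) * det A = det N * (\<Prod>j<k. g j)"
proof -
  have "(\<Prod>r<k. f r) * det A = (\<Sum>p | p permutes {0..<k}. signof p * (\<Prod>r=0..<k. f r * A $$ (r, p r)))"
    unfolding det_def'[OF A] sum_distrib_left
    by (intro sum.cong refl) (simp add: prod.distrib atLeast0LessThan mult.left_commute)
  also have "\<dots> = (\<Sum>p | p permutes {0..<k}. signof p * (\<Prod>r=0..<k. N $$ (r, p r)) * (\<Prod>j<k. g j))"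
  proof (intro sum.cong refl)
    fix p assume "p \<in> {p. p permutes {0..<k}}"
    then have p: "p permutes {0..<k}"
      by simp
    have "(\<Prod>r=0..<k. f r * A $$ (r, p r)) = (\<Prod>r=0..<k. N $$ (r, p r) * g (p r))"
      using AN permutes_in_image[OF p] by (intro prod.cong refl) simp
    also have "\<dots> = (\<Prod>r=0..<k. N $$ (r, p r)) * (\<Prod>j<k. g j)"
      using prod.permute[OF p, of g] by (simp add: prod.distrib comp_def atLeast0LessThan)
    finally show "signof p * (\<Prod>r=0..<k. f r * A $$ (r, p r))
        = signof p * (\<Prod>r=0..<k. N $$ (r, p r)) * (\<Prod>j<k. g j)"
      by (simp add: mult.assoc)
  qed
  also have "\<dots> = det N * (\<Prod>j<k. g j)"
    unfolding det_def'[OF N] sum_distrib_right ..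
  finally show ?thesis .
qed

lemma det_nonzero_if_constant_coeffs_one:
  fixes N :: "'a::idom poly mat"
  assumes "N \<in> carrier_mat k k" "map_mat (\<lambda>p. poly p 0) N = 1\<^sub>m k"
  shows "det N \<noteq> 0"
proof -
  have "comm_ring_hom (\<lambda>p :: 'a poly. poly p 0)"
    by unfold_locales simp_all
  then have "poly (det N) 0 = det (map_mat (\<lambda>p. poly p 0) N)"
    by (simp add: comm_ring_hom.hom_det)
  then show ?thesis
    using assms(2) by auto
qed

lemma solve_unit_vector:
  fixes A :: "'a::field mat"
  assumes A: "A \<in> carrier_mat k k" and "det A \<noteq> 0" and "j0 < k"
  shows "\<exists>c. \<forall>r<k. (\<Sum>j<k. A $$ (r, j) * c j) = of_bool (r = j0)"
proof
  have adj: "adj_mat A \<in> carrier_mat k k" "A * adj_mat A = det A \<cdot>\<^sub>m 1\<^sub>m k"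
    using adj_mat[OF A] by simp_all
  show "\<forall>r<k. (\<Sum>j<k. A $$ (r, j) * (adj_mat A $$ (j, j0) / det A)) = of_bool (r = j0)"
  proof (intro allI impI)
    fix r assume "r < k"
    have "(\<Sum>j<k. A $$ (r, j) * adj_mat A $$ (j, j0)) = (A * adj_mat A) $$ (r, j0)"
      using A adj(1) \<open>r < k\<close> \<open>j0 < k\<close> by (simp add: scalar_prod_def atLeast0LessThan)
    also have "\<dots> = det A * of_bool (r = j0)"
      using adj(2) \<open>r < k\<close> \<open>j0 < k\<close> by simp
    finally show "(\<Sum>j<k. A $$ (r, j) * (adj_mat A $$ (j, j0) / det A)) = of_bool (r = j0)"
      using \<open>det A \<noteq> 0\<close> by (simp add: sum_divide_distrib[symmetric])
  qed
qed

section \<open>The modules \<open>W\<^sub>s\<close>\<close>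

lemma qq_eq_to_fract: "qq = to_fract [:0, 1:]"
  by (simp add: qq_def to_fract_def)

lemma qq_power_eq_1_iff: "qq ^ k = 1 \<longleftrightarrow> k = 0"
proof -
  have "qq ^ k = to_fract ([:0, 1:] ^ k)"
    by (simp add: qq_eq_to_fract to_fract_hom.hom_power)
  moreover have "[:0, 1:] ^ k = (1 :: rat poly) \<longleftrightarrow> k = 0"
    by (metis degree_1 degree_linear_power power_0)
  ultimately show ?thesis
    by (metis to_fract_1 to_fract_eq_iff)
qed

lemma qq_nonzero [simp]: "qq \<noteq> 0"
  by (simp add: qq_eq_to_fract)

lemma qq_power_minus_inverse_nonzero:
  assumes "0 < j"
  shows "qq ^ j - inverse (qq ^ j) \<noteq> 0"
proof
  assume "qq ^ j - inverse (qq ^ j) = 0"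
  then have "qq ^ j * qq ^ j = 1"
    by (simp add: field_simps)
  then have "qq ^ (2 * j) = 1"
    by (simp add: mult_2 power_add)
  with assms show False
    by (simp add: qq_power_eq_1_iff)
qed

lemma qint_nonzero:
  assumes "1 \<le> k"
  shows "qint k \<noteq> 0"
proof -
  obtain j where j: "k = int j" "0 < j"
    using assms by (metis int_one_le_iff_zero_less nonneg_int_cases zero_less_imp_eq_int)
  show ?thesis
    using qq_power_minus_inverse_nonzero[OF j(2)] qq_power_minus_inverse_nonzero[of 1]
    by (simp add: qint_def j(1) power_int_minus)
qed

lemma Wbasis_outside: "b \<in> Wbasis n eps s \<Longrightarrow> i \<notin> {1..n} \<Longrightarrow> b i = 0"
  by (simp add: Wbasis_def Zplus_def)

lemma Wbasis_odd_le_1: "b \<in> Wbasis n eps s \<Longrightarrow> i \<in> {1..n} \<Longrightarrow> eps i \<Longrightarrow> b i \<le> 1"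
  by (simp add: Wbasis_def Zplus_def)

lemma Wbasis_sum: "b \<in> Wbasis n eps s \<Longrightarrow> (\<Sum>i=1..n. b i) = s"
  by (simp add: Wbasis_def)

lemma finite_Wbasis: "finite (Wbasis n eps s)"
proof (rule finite_subset)
  show "Wbasis n eps s \<subseteq> {b. \<forall>i. (i \<in> {1..n} \<longrightarrow> b i \<in> {0..s}) \<and> (i \<notin> {1..n} \<longrightarrow> b i = 0)}"
  proof (safe)
    fix b i assume b: "b \<in> Wbasis n eps s"
    show "b i \<in> {0..s}" if "i \<in> {1..n}"
      using member_le_sum[of i "{1..n}" b] that Wbasis_sum[OF b] by simp
    show "b i = 0" if "i \<notin> {1..n}"
      using Wbasis_outside[OF b that] .
  qed
qed (rule finite_set_of_finite_funs; simp)

lemma Wbasis_exists_greater: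
  assumes b: "b \<in> Wbasis n eps s" and b': "b' \<in> Wbasis n eps s" and "b \<noteq> b'"
  shows "\<exists>p\<in>{1..n}. b' p < b p"
proof (rule ccontr)
  assume "\<not> ?thesis"
  then have le: "\<forall>q\<in>{1..n}. b q \<le> b' q"
    by (simp add: not_less)
  have "\<forall>q\<in>{1..n}. b q = b' q"
  proof (rule ccontr)
    assume "\<not> (\<forall>q\<in>{1..n}. b q = b' q)"
    with le have "(\<Sum>i=1..n. b i) < (\<Sum>i=1..n. b' i)"
      by (intro sum_strict_mono_ex1) (auto simp: le_less)
    with b b' show False
      by (metis Wbasis_sum less_irrefl)
  qed
  have "b = b'"
  proof
    fix q
    show "b q = b' q"
      using \<open>\<forall>q\<in>{1..n}. b q = b' q\<close> Wbasis_outside[OF b] Wbasis_outside[OF b'] by (cases "q \<in> {1..n}") auto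
  qed
  with \<open>b \<noteq> b'\<close> show False ..
qed

definition move :: "(nat \<Rightarrow> nat) \<Rightarrow> nat \<Rightarrow> nat \<Rightarrow> nat \<Rightarrow> nat" where
  "move b p r = b(p := b p - 1, r := b r + 1)"

lemma int_move:
  "p \<noteq> r \<Longrightarrow> 1 \<le> b p \<Longrightarrow> int (move b p r q) = int (b q) - of_bool (q = p) + of_bool (q = r)"
  by (auto simp: move_def)

lemma move_move:
  assumes "p \<noteq> q" "q \<noteq> r" "p \<noteq> r"
  shows "1 \<le> b p \<Longrightarrow> move (move b p q) q r = move b p r"
    and "1 \<le> b q \<Longrightarrow> move (move b q r) p q = move b p r"
  using assms by (auto simp: move_def)

lemma move_in_Wbasis:
  assumes b: "b \<in> Wbasis n eps s" and pr: "p \<in> {1..n}" "r \<in> {1..n}" "p \<noteq> r"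
    and "1 \<le> b p" and room: "eps r \<longrightarrow> b r = 0"
  shows "move b p r \<in> Wbasis n eps s"
proof -
  have "int (\<Sum>i=1..n. move b p r i) = (\<Sum>i=1..n. int (b i) - of_bool (i = p) + of_bool (i = r))"
    using int_move[of p r b] pr(3) \<open>1 \<le> b p\<close> by simp
  also have "\<dots> = int (\<Sum>i=1..n. b i)"
    using pr by (simp add: sum.distrib sum_subtractf)
  finally have "(\<Sum>i=1..n. move b p r i) = s"
    using Wbasis_sum[OF b] by (simp only: of_nat_eq_iff)
  moreover have "move b p r \<in> Zplus n eps"
    using b pr room by (auto simp: Zplus_def Wbasis_def move_def)
  ultimately show ?thesis
    by (simp add: Wbasis_def)
qed

text \<open>Every generator \<open>e\<^sub>i\<close>, \<open>f\<^sub>i\<close> acts on the basis of \<open>W\<^sub>s\<close> by such a partial move, up to a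
  nonzero scalar.\<close>

definition move_step :: "nat \<Rightarrow> (nat \<Rightarrow> bool) \<Rightarrow> nat \<Rightarrow> nat \<Rightarrow> nat \<Rightarrow> (nat \<Rightarrow> nat) \<Rightarrow> (nat \<Rightarrow> nat) option" where
  "move_step n eps s p r b =
     (if b \<in> Wbasis n eps s \<and> 1 \<le> b p \<and> move b p r \<in> Zplus n eps then Some (move b p r) else None)"

lemma move_step_eq_SomeI:
  "b \<in> Wbasis n eps s \<Longrightarrow> p \<in> {1..n} \<Longrightarrow> r \<in> {1..n} \<Longrightarrow> p \<noteq> r \<Longrightarrow> 1 \<le> b p \<Longrightarrow>
   (eps r \<longrightarrow> b r = 0) \<Longrightarrow> move_step n eps s p r b = Some (move b p r)"
  using move_in_Wbasis by (simp add: move_step_def Wbasis_def)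

lemma move_step_SomeD:
  assumes "move_step n eps s p r b = Some b'" and "p \<in> {1..n}" "r \<in> {1..n}" "p \<noteq> r"
  shows "b \<in> Wbasis n eps s" "1 \<le> b p" "b' = move b p r" "b' \<in> Wbasis n eps s"
proof -
  show b: "b \<in> Wbasis n eps s" and bp: "1 \<le> b p" and b': "b' = move b p r"
    using assms(1) by (auto simp: move_step_def split: if_splits)
  have "move b p r \<in> Zplus n eps"
    using assms(1) by (auto simp: move_step_def split: if_splits)
  then have "eps r \<longrightarrow> b r = 0"
    using assms(3) by (auto simp: Zplus_def move_def)
  then show "b' \<in> Wbasis n eps s"
    using move_in_Wbasis[OF b assms(2-4) bp] b' by simp
qed

lemma move_step_converse:
  assumes "move_step n eps s p r b = Some b'" and pr: "p \<in> {1..n}" "r \<in> {1..n}" "p \<noteq> r"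
  shows "move_step n eps s r p b' = Some b"
proof -
  note D = move_step_SomeD[OF assms]
  have "move b' r p = b"
    using D(2,3) pr(3) by (auto simp: move_def)
  moreover have "eps p \<longrightarrow> b' p = 0"
    using D(1,3) Wbasis_odd_le_1[OF D(1) pr(1)] pr(3) by (auto simp: move_def)
  ultimately show ?thesis
    using move_step_eq_SomeI[OF D(4) pr(2,1) pr(3)[symmetric]] D(3) pr(3) by (simp add: move_def)
qed

definition cyc_succ :: "nat \<Rightarrow> nat \<Rightarrow> nat" where
  "cyc_succ n p = (if p = n then 1 else p + 1)"

lemma cyc_succ_funpow: "p < n \<Longrightarrow> (cyc_succ n ^^ k) (Suc p) = Suc ((p + k) mod n)"
  by (induction k) (simp_all add: cyc_succ_def mod_Suc)

lemma cyc_succ_reaches: "p \<in> {1..n} \<Longrightarrow> r \<in> {1..n} \<Longrightarrow> \<exists>d. r = (cyc_succ n ^^ d) p"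
proof -
  assume "p \<in> {1..n}" "r \<in> {1..n}"
  then obtain p0 r0 where "p = Suc p0" "r = Suc r0" "p0 < n" "r0 < n"
    by (metis atLeastAtMost_iff not0_implies_Suc not_one_le_zero Suc_le_lessD)
  then have "r = (cyc_succ n ^^ (n + r0 - p0)) p"
    by (simp add: cyc_succ_funpow)
  then show ?thesis ..
qed

definition forward_move :: "nat \<Rightarrow> (nat \<Rightarrow> bool) \<Rightarrow> nat \<Rightarrow> (nat \<Rightarrow> nat) \<Rightarrow> (nat \<Rightarrow> nat) \<Rightarrow> bool" where
  "forward_move n eps s b b' \<longleftrightarrow> (\<exists>p\<in>{1..n}. move_step n eps s p (cyc_succ n p) b = Some b')"

lemma cyc_succ_in_range: "p \<in> {1..n} \<Longrightarrow> cyc_succ n p \<in> {1..n}"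
  by (auto simp: cyc_succ_def)

lemma cyc_succ_neq: "2 \<le> n \<Longrightarrow> cyc_succ n p \<noteq> p"
  by (auto simp: cyc_succ_def)

lemma forward_move_cyc_succ:
  "2 \<le> n \<Longrightarrow> b \<in> Wbasis n eps s \<Longrightarrow> p \<in> {1..n} \<Longrightarrow> 1 \<le> b p \<Longrightarrow>
    (eps (cyc_succ n p) \<longrightarrow> b (cyc_succ n p) = 0) \<Longrightarrow> forward_move n eps s b (move b p (cyc_succ n p))"
  using move_step_eq_SomeI[of b n eps s p "cyc_succ n p"] cyc_succ_in_range cyc_succ_neq
  unfolding forward_move_def by metis

text \<open>A unit is carried from \<open>p\<close> to \<open>r\<close> site by site; when the next site is an occupied
  odd site, the unit sitting there is carried on first.\<close>

lemma forward_move_transfer: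
  assumes n: "2 \<le> n"
  shows "p \<in> {1..n} \<Longrightarrow> r \<in> {1..n} \<Longrightarrow> p \<noteq> r \<Longrightarrow> r = (cyc_succ n ^^ d) p \<Longrightarrow>
    b \<in> Wbasis n eps s \<Longrightarrow> 1 \<le> b p \<Longrightarrow> (eps r \<longrightarrow> b r = 0) \<Longrightarrow>
    (forward_move n eps s)\<^sup>*\<^sup>* b (move b p r)"
proof (induction d arbitrary: p b)
  case (Suc d)
  define p' where "p' = cyc_succ n p"
  have p': "p' \<in> {1..n}" "p \<noteq> p'" "r = (cyc_succ n ^^ d) p'"
    using cyc_succ_in_range[OF Suc.prems(1)] cyc_succ_neq[OF n, of p] Suc.prems(4)
    by (auto simp: p'_def funpow_swap1)
  note step = forward_move_cyc_succ[OF n _ Suc.prems(1), folded p'_def]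
  consider "p' = r" | "p' \<noteq> r" "eps p' \<longrightarrow> b p' = 0" | "p' \<noteq> r" "eps p'" "b p' = 1"
    using Wbasis_odd_le_1[OF Suc.prems(5) p'(1)] by force
  then show ?case
  proof cases
    case 1
    then show ?thesis
      using step[OF Suc.prems(5,6)] Suc.prems(7) by auto
  next
    case 2
    define b1 where "b1 = move b p p'"
    have "b1 \<in> Wbasis n eps s"
      using move_in_Wbasis[OF Suc.prems(5,1) p'(1,2) Suc.prems(6)] 2(2) by (simp add: b1_def)
    moreover have "1 \<le> b1 p'" "eps r \<longrightarrow> b1 r = 0"
      using 2(1) Suc.prems(3,7) p'(2) by (auto simp: b1_def move_def)
    ultimately have "(forward_move n eps s)\<^sup>*\<^sup>* b1 (move b1 p' r)"
      using Suc.IH[OF p'(1) Suc.prems(2) 2(1) p'(3)] by blast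
    then show ?thesis
      using step[OF Suc.prems(5,6)] 2(2) move_move(1)[OF p'(2) 2(1) Suc.prems(3), of b] Suc.prems(6)
      by (simp add: b1_def converse_rtranclp_into_rtranclp)
  next
    case 3
    define b2 where "b2 = move b p' r"
    have "(forward_move n eps s)\<^sup>*\<^sup>* b b2" and b2: "b2 \<in> Wbasis n eps s"
      using Suc.IH[OF p'(1) Suc.prems(2) 3(1) p'(3) Suc.prems(5)]
        move_in_Wbasis[OF Suc.prems(5) p'(1) Suc.prems(2) 3(1)] 3(3) Suc.prems(7) by (simp_all add: b2_def)
    moreover have "1 \<le> b2 p" "b2 p' = 0"
      using Suc.prems(3,6) p'(2) 3 by (auto simp: b2_def move_def)
    ultimately show ?thesis
      using step[OF b2] move_move(2)[OF p'(2) 3(1) Suc.prems(3), of b] 3(3)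
      by (simp add: b2_def rtranclp.rtrancl_into_rtrancl)
  qed
qed simp

lemma forward_move_connected:
  assumes n: "2 \<le> n" and b': "b' \<in> Wbasis n eps s"
  shows "b \<in> Wbasis n eps s \<Longrightarrow> (forward_move n eps s)\<^sup>*\<^sup>* b b'"
proof (induction "\<Sum>q=1..n. b q - b' q" arbitrary: b rule: less_induct)
  case less
  show ?case
  proof (cases "b = b'")
    case False
    obtain p where p: "p \<in> {1..n}" "b' p < b p"
      using Wbasis_exists_greater[OF less.prems b' False] by blast
    obtain r where r: "r \<in> {1..n}" "b r < b' r"
      using Wbasis_exists_greater[OF b' less.prems] False by metis
    have pr: "p \<noteq> r" and room: "eps r \<longrightarrow> b r = 0"
      using p r Wbasis_odd_le_1[OF b' r(1)] by auto
    obtain d where "r = (cyc_succ n ^^ d) p"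
      using cyc_succ_reaches[OF p(1) r(1)] by blast
    then have "(forward_move n eps s)\<^sup>*\<^sup>* b (move b p r)"
      using forward_move_transfer[OF n p(1) r(1) pr _ less.prems _ room] p(2) by simp
    moreover have "(\<Sum>q=1..n. move b p r q - b' q) < (\<Sum>q=1..n. b q - b' q)"
      using p r pr by (intro sum_strict_mono_ex1) (auto simp: move_def)
    then have "(forward_move n eps s)\<^sup>*\<^sup>* (move b p r) b'"
      using less.hyps move_in_Wbasis[OF less.prems p(1) r(1) pr _ room] p(2) by simp
    ultimately show ?thesis
      by (rule rtranclp_trans)
  qed simp
qed

fun run_word :: "('l \<Rightarrow> 'c \<Rightarrow> 'c option) \<Rightarrow> 'l list \<Rightarrow> 'c \<Rightarrow> 'c option" where
  "run_word st [] b = Some b"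
| "run_word st (a # w) b = Option.bind (st a b) (run_word st w)"

lemma run_word_append: "run_word st (w1 @ w2) b = Option.bind (run_word st w1 b) (run_word st w2)"
proof (induction w1 arbitrary: b)
  case (Cons a w1)
  then show ?case
    by (cases "st a b") simp_all
qed simp

lemma run_word_if_rtranclp:
  "(\<lambda>c c'. \<exists>a\<in>L. st a c = Some c')\<^sup>*\<^sup>* b b' \<Longrightarrow> \<exists>w. set w \<subseteq> L \<and> run_word st w b = Some b'"
proof (induction rule: rtranclp_induct)
  case base
  show ?case
    by (rule exI[of _ "[]"]) simp
next
  case (step c c')
  then obtain w a where "set w \<subseteq> L" "run_word st w b = Some c" "a \<in> L" "st a c = Some c'"
    by blast
  then show ?case
    by (intro exI[of _ "w @ [a]"]) (simp add: run_word_append)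
qed

lemma idx_less: "i < n \<Longrightarrow> idx n i = (if i = 0 then n else i)"
  by (simp add: idx_def)

lemma idx_Suc: "i < n \<Longrightarrow> idx n (i + 1) = i + 1"
  by (cases "i + 1 = n") (auto simp: idx_def)

lemma idx_in_range: "1 \<le> n \<Longrightarrow> idx n i \<in> {1..n}"
  using mod_less_divisor[of n i] by (auto simp: idx_def)

lemma idx_Suc_neq: "2 \<le> n \<Longrightarrow> i < n \<Longrightarrow> idx n i \<noteq> idx n (i + 1)"
  using idx_less[of i n] idx_Suc[of i n] by auto

lemma idx_mod:
  assumes "2 \<le> n" "p \<in> {1..n}"
  shows "idx n (p mod n) = p \<and> idx n (p mod n + 1) = cyc_succ n p"
proof (cases "p = n")
  case False
  then show ?thesis
    using assms idx_less[of p n] idx_Suc[of p n] by (simp add: cyc_succ_def)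
qed (use assms in \<open>simp add: idx_def cyc_succ_def\<close>)

definition stepE :: "nat \<Rightarrow> (nat \<Rightarrow> bool) \<Rightarrow> nat \<Rightarrow> nat \<Rightarrow> (nat \<Rightarrow> nat) \<Rightarrow> (nat \<Rightarrow> nat) option" where
  "stepE n eps s i = move_step n eps s (idx n (i + 1)) (idx n i)"

definition stepF :: "nat \<Rightarrow> (nat \<Rightarrow> bool) \<Rightarrow> nat \<Rightarrow> nat \<Rightarrow> (nat \<Rightarrow> nat) \<Rightarrow> (nat \<Rightarrow> nat) option" where
  "stepF n eps s i = move_step n eps s (idx n i) (idx n (i + 1))"

lemma mv_e_eq_move: "2 \<le> n \<Longrightarrow> i < n \<Longrightarrow> mv_e n i b = move b (idx n (i + 1)) (idx n i)"
  using idx_Suc_neq by (auto simp: mv_e_def move_def fun_upd_twist)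

lemma Emat_scale: "Emat n eps s x i b' b = (if i = 0 then x else 1) * Emat n eps s 1 i b' b"
  by (simp add: Emat_def)

lemma Fmat_scale: "Fmat n eps s x i b' b = (if i = 0 then inverse x else 1) * Fmat n eps s 1 i b' b"
  by (simp add: Fmat_def)

lemma Emat_nonzero_iff:
  assumes "2 \<le> n" "i < n"
  shows "Emat n eps s 1 i b' b \<noteq> 0 \<longleftrightarrow> stepE n eps s i b = Some b'"
  by (auto simp: Emat_def stepE_def move_step_def mv_e_eq_move[OF assms] intro!: qint_nonzero)

lemma Fmat_nonzero_iff: "Fmat n eps s 1 i b' b \<noteq> 0 \<longleftrightarrow> stepF n eps s i b = Some b'"
  by (auto simp: Fmat_def stepF_def move_step_def mv_f_def move_def intro!: qint_nonzero)

lemma stepF_connected: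
  assumes n: "2 \<le> n" and "b \<in> Wbasis n eps s" "b' \<in> Wbasis n eps s"
  shows "(\<lambda>c c'. \<exists>i\<in>{..<n}. stepF n eps s i c = Some c')\<^sup>*\<^sup>* b b'"
proof (rule mono_rtranclp[rule_format, OF _ forward_move_connected[OF n assms(3,2)]])
  fix c c' assume "forward_move n eps s c c'"
  then obtain p where "p \<in> {1..n}" "move_step n eps s p (cyc_succ n p) c = Some c'"
    by (auto simp: forward_move_def)
  then show "\<exists>i\<in>{..<n}. stepF n eps s i c = Some c'"
    using idx_mod[OF n] n by (intro bexI[of _ "p mod n"]) (auto simp: stepF_def)
qed

lemma stepE_connected:
  assumes n: "2 \<le> n" and "b \<in> Wbasis n eps s" "b' \<in> Wbasis n eps s"
  shows "(\<lambda>c c'. \<exists>i\<in>{..<n}. stepE n eps s i c = Some c')\<^sup>*\<^sup>* b b'"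
proof -
  have "(forward_move n eps s)\<inverse>\<inverse>\<^sup>*\<^sup>* b b'"
    using forward_move_connected[OF n assms(2,3)] by (simp add: rtranclp_conversep)
  then show ?thesis
  proof (rule mono_rtranclp[rule_format, rotated])
    fix c c' assume "(forward_move n eps s)\<inverse>\<inverse> c c'"
    then obtain p where p: "p \<in> {1..n}" "move_step n eps s p (cyc_succ n p) c' = Some c"
      by (auto simp: forward_move_def)
    then have "move_step n eps s (cyc_succ n p) p c = Some c'"
      using move_step_converse cyc_succ_in_range cyc_succ_neq[OF n] by metis
    then show "\<exists>i\<in>{..<n}. stepE n eps s i c = Some c'"
      using idx_mod[OF n p(1)] n by (intro bexI[of _ "p mod n"]) (auto simp: stepE_def)
  qed
qed

definition shiftE :: "nat \<Rightarrow> nat \<Rightarrow> nat \<Rightarrow> int" where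
  "shiftE n i q = of_bool (q = idx n i) - of_bool (q = idx n (i + 1))"

lemma stepE_SomeD:
  assumes "2 \<le> n" "i < n" "stepE n eps s i b = Some b'"
  shows "b \<in> Wbasis n eps s \<and> b' \<in> Wbasis n eps s \<and> (\<forall>q. int (b' q) = int (b q) + shiftE n i q)"
proof -
  have sites: "idx n (i + 1) \<in> {1..n}" "idx n i \<in> {1..n}" "idx n (i + 1) \<noteq> idx n i"
    using idx_in_range[of n] idx_Suc_neq[OF assms(1,2)] assms(1) by auto
  show ?thesis
    using move_step_SomeD[OF assms(3)[unfolded stepE_def] sites] int_move[OF sites(3)] by (auto simp: shiftE_def)
qed

lemma stepF_SomeD:
  assumes "2 \<le> n" "i < n" "stepF n eps s i b = Some b'"
  shows "b \<in> Wbasis n eps s \<and> b' \<in> Wbasis n eps s \<and> (\<forall>q. int (b' q) = int (b q) - shiftE n i q)"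
proof -
  have sites: "idx n i \<in> {1..n}" "idx n (i + 1) \<in> {1..n}" "idx n i \<noteq> idx n (i + 1)"
    using idx_in_range[of n] idx_Suc_neq[OF assms(1,2)] assms(1) by auto
  show ?thesis
    using move_step_SomeD[OF assms(3)[unfolded stepF_def] sites] int_move[OF sites(3)] by (auto simp: shiftE_def)
qed

section \<open>Monomial actions\<close>

text \<open>Abstracts how the \<open>e\<^sub>i\<close> (or the \<open>f\<^sub>i\<close>) act on the basis of \<open>W\<^sub>s\<close>.\<close>

locale monomial_action =
  fixes n :: nat and eps :: "nat \<Rightarrow> bool" and s :: nat and L :: "'l set"
    and st :: "'l \<Rightarrow> (nat \<Rightarrow> nat) \<Rightarrow> (nat \<Rightarrow> nat) option"
    and shift :: "'l \<Rightarrow> nat \<Rightarrow> int"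
    and M :: "'l \<Rightarrow> (nat \<Rightarrow> nat) \<Rightarrow> (nat \<Rightarrow> nat) \<Rightarrow> K"
  assumes step_SomeD: "a \<in> L \<Longrightarrow> st a b = Some b' \<Longrightarrow>
      b \<in> Wbasis n eps s \<and> b' \<in> Wbasis n eps s \<and> (\<forall>q. int (b' q) = int (b q) + shift a q)"
    and M_nonzero_iff: "a \<in> L \<Longrightarrow> M a b' b \<noteq> 0 \<longleftrightarrow> st a b = Some b'"
    and connected: "b \<in> Wbasis n eps s \<Longrightarrow> b' \<in> Wbasis n eps s \<Longrightarrow>
      (\<lambda>c c'. \<exists>a\<in>L. st a c = Some c')\<^sup>*\<^sup>* b b'"
begin

abbreviation W :: "(nat \<Rightarrow> nat) set" where
  "W \<equiv> Wbasis n eps s"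

definition word_shift :: "'l list \<Rightarrow> nat \<Rightarrow> int" where
  "word_shift w q = (\<Sum>a\<leftarrow>w. shift a q)"

definition homogeneous :: "('l list \<times> K) list \<Rightarrow> (nat \<Rightarrow> int) \<Rightarrow> bool" where
  "homogeneous C \<delta> \<longleftrightarrow> (\<forall>(w, c)\<in>set C. set w \<subseteq> L \<and> word_shift w = \<delta>)"

lemma homogeneous_comb_mult:
  "homogeneous C1 \<delta>1 \<Longrightarrow> homogeneous C2 \<delta>2 \<Longrightarrow> homogeneous (comb_mult C1 C2) (\<lambda>q. \<delta>1 q + \<delta>2 q)"
  by (fastforce simp: homogeneous_def comb_mult_def word_shift_def fun_eq_iff)

lemma run_word_SomeD:
  "set w \<subseteq> L \<Longrightarrow> b \<in> W \<Longrightarrow> run_word st w b = Some b' \<Longrightarrow>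
    b' \<in> W \<and> (\<forall>q. int (b' q) = int (b q) + word_shift w q)"
proof (induction w arbitrary: b)
  case Nil
  then show ?case
    by (simp add: word_shift_def)
next
  case (Cons a w)
  then obtain b1 where "st a b = Some b1" "run_word st w b1 = Some b'"
    by (cases "st a b") auto
  then show ?case
    using Cons step_SomeD[of a b b1] by (auto simp: word_shift_def)
qed

lemma connected_by_word: "b \<in> W \<Longrightarrow> b' \<in> W \<Longrightarrow> \<exists>w. set w \<subseteq> L \<and> run_word st w b = Some b'"
  by (rule run_word_if_rtranclp[OF connected])

lemma word_mat_nonzero_iff:
  "set w \<subseteq> L \<Longrightarrow> word_mat W M w b' b \<noteq> 0 \<longleftrightarrow> b \<in> W \<and> run_word st w b = Some b'"
proof (induction w arbitrary: b)
  case Nil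
  then show ?case
    by (auto simp: mat_one_def)
next
  case (Cons a w)
  then have a: "a \<in> L"
    by simp
  show ?case
  proof (cases "st a b")
    case None
    then have "M a j b = 0" for j
      using M_nonzero_iff[OF a, of j b] by simp
    then show ?thesis
      using None by (simp add: mat_mul_def)
  next
    case (Some b1)
    have b: "b \<in> W" "b1 \<in> W"
      using step_SomeD[OF a Some] by auto
    have "word_mat W M (a # w) b' b = (\<Sum>j\<in>W. if j = b1 then word_mat W M w b' b1 * M a b1 b else 0)"
      unfolding word_mat.simps mat_mul_def using M_nonzero_iff[OF a, of _ b] Some
      by (intro sum.cong) auto
    also have "\<dots> = word_mat W M w b' b1 * M a b1 b"
      using b by (simp add: finite_Wbasis)
    finally show ?thesis
      using Cons M_nonzero_iff[OF a, of b1 b] Some b by simp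
  qed
qed

lemma loop_word_diagonal:
  assumes "set w \<subseteq> L" "word_shift w = (\<lambda>_. 0)"
  shows "diagonal_on W (word_mat W M w)"
  unfolding diagonal_on_def
proof (intro ballI impI)
  fix i k assume "i \<in> W" "k \<in> W" "word_mat W M w i k \<noteq> 0"
  then have "\<forall>q. int (i q) = int (k q)"
    using run_word_SomeD[OF assms(1)] word_mat_nonzero_iff[OF assms(1)] assms(2) by simp
  then show "i = k"
    by (simp add: fun_eq_iff)
qed

text \<open>A loop through \<open>d\<close> that starts at \<open>b\<close> cannot be run from \<open>c\<close> when the configuration
  \<open>c + d - b\<close> it would pass through is not admissible at the site \<open>q\<close>.\<close>

lemma separating_loop_through:
  assumes b: "b \<in> W" and d: "d \<in> W" and c: "c \<in> W"
    and q: "\<forall>z\<in>W. int (z q) \<noteq> int (c q) + int (d q) - int (b q)"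
  shows "\<exists>w. set w \<subseteq> L \<and> word_shift w = (\<lambda>_. 0) \<and> word_mat W M w b b \<noteq> word_mat W M w c c"
proof -
  obtain u where u: "set u \<subseteq> L" "run_word st u b = Some d"
    using connected_by_word[OF b d] by blast
  obtain v where v: "set v \<subseteq> L" "run_word st v d = Some b"
    using connected_by_word[OF d b] by blast
  have uv: "set (u @ v) \<subseteq> L" "run_word st (u @ v) b = Some b"
    using u v by (simp_all add: run_word_append)
  have "word_shift (u @ v) = (\<lambda>_. 0)"
    using run_word_SomeD[OF uv(1) b uv(2)] by (simp add: fun_eq_iff)
  moreover have "run_word st u c = None"
  proof (rule ccontr)
    assume "run_word st u c \<noteq> None"
    then obtain z where "run_word st u c = Some z"
      by blast
    then have "z \<in> W" "int (z q) = int (c q) + word_shift u q"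
      using run_word_SomeD[OF u(1) c] by auto
    moreover have "word_shift u q = int (d q) - int (b q)"
      using run_word_SomeD[OF u(1) b u(2)] by simp
    ultimately show False
      using q by auto
  qed
  then have "word_mat W M (u @ v) c c = 0"
    using word_mat_nonzero_iff[OF uv(1), of c c] by (simp add: run_word_append)
  moreover have "word_mat W M (u @ v) b b \<noteq> 0"
    using word_mat_nonzero_iff[OF uv(1)] uv(2) b by simp
  ultimately show ?thesis
    using uv(1) by (intro exI[of _ "u @ v"]) simp
qed

lemma separating_loop_odd_site:
  assumes b: "b \<in> W" and c: "c \<in> W" and q: "q \<in> {1..n}" "eps q" "b q = 0" "c q = 1"
  shows "\<exists>w. set w \<subseteq> L \<and> word_shift w = (\<lambda>_. 0) \<and> word_mat W M w b b \<noteq> word_mat W M w c c"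
proof -
  have "\<forall>z\<in>W. int (z q) \<noteq> int (c q) + int (c q) - int (b q)"
    using Wbasis_odd_le_1 q by fastforce
  then show ?thesis
    using separating_loop_through[OF b c c] by blast
qed

lemma separating_loop_even:
  assumes b: "b \<in> W" and c: "c \<in> W" and "b \<noteq> c" and odd: "\<forall>q\<in>{1..n}. eps q \<longrightarrow> b q = c q"
  shows "\<exists>w. set w \<subseteq> L \<and> word_shift w = (\<lambda>_. 0) \<and> word_mat W M w b b \<noteq> word_mat W M w c c"
proof -
  obtain q where q: "q \<in> {1..n}" "c q < b q"
    using Wbasis_exists_greater[OF b c \<open>b \<noteq> c\<close>] by blast
  obtain r where r: "r \<in> {1..n}" "r \<noteq> q" "\<not> eps r"
  proof (rule ccontr)
    assume "\<not> thesis"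
    then have "\<forall>r\<in>{1..n} - {q}. b r = c r"
      using that odd by blast
    then have "(\<Sum>i\<in>{1..n} - {q}. b i) = (\<Sum>i\<in>{1..n} - {q}. c i)"
      by (intro sum.cong) auto
    moreover have "(\<Sum>i=1..n. b i) = (\<Sum>i=1..n. c i)"
      using Wbasis_sum b c by metis
    ultimately show False
      using q by (simp add: sum.remove)
  qed
  define d where "d = (\<lambda>p. if p = r then s else (0::nat))"
  have d: "d \<in> W"
    using r by (simp add: d_def Wbasis_def Zplus_def sum.delta)
  have "\<forall>z\<in>W. int (z q) \<noteq> int (c q) + int (d q) - int (b q)"
    using q(2) r(2) by (simp add: d_def)
  then show ?thesis
    using separating_loop_through[OF b d c] by blast
qed

lemma separating_loop:
  assumes b: "b \<in> W" and c: "c \<in> W" and "b \<noteq> c"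
  shows "\<exists>w. set w \<subseteq> L \<and> word_shift w = (\<lambda>_. 0) \<and> word_mat W M w b b \<noteq> word_mat W M w c c"
proof (cases "\<exists>q\<in>{1..n}. eps q \<and> b q \<noteq> c q")
  case True
  then obtain q where q: "q \<in> {1..n}" "eps q" "b q \<noteq> c q"
    by blast
  then have "b q \<le> 1" "c q \<le> 1"
    using Wbasis_odd_le_1 b c by blast+
  then have "b q = 0 \<and> c q = 1 \<or> b q = 1 \<and> c q = 0"
    using q(3) by auto
  then show ?thesis
    using separating_loop_odd_site[OF b c q(1,2)] separating_loop_odd_site[OF c b q(1,2)] by metis
next
  case False
  then show ?thesis
    using separating_loop_even[OF assms] by blast
qed

lemma separating_comb:
  assumes b: "b \<in> W" and c: "c \<in> W" and "b \<noteq> c"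
  shows "\<exists>Q. homogeneous Q (\<lambda>_. 0) \<and> diagonal_on W (comb_mat W M id Q)
    \<and> comb_mat W M id Q b b = 1 \<and> comb_mat W M id Q c c = 0"
proof -
  obtain w where w: "set w \<subseteq> L" "word_shift w = (\<lambda>_. 0)" "word_mat W M w b b \<noteq> word_mat W M w c c"
    using separating_loop[OF assms] by blast
  define \<mu>b \<mu>c where "\<mu>b = word_mat W M w b b" and "\<mu>c = word_mat W M w c c"
  text \<open>Interpolation: \<open>(w - \<mu>c) / (\<mu>b - \<mu>c)\<close> is \<open>1\<close> at \<open>b\<close> and \<open>0\<close> at \<open>c\<close>.\<close>
  define Q where "Q = [(w, inverse (\<mu>b - \<mu>c)), ([], - \<mu>c * inverse (\<mu>b - \<mu>c))]"
  have Q: "comb_mat W M id Q = (\<lambda>i k. inverse (\<mu>b - \<mu>c) * (word_mat W M w i k - \<mu>c * mat_one W i k))"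
    by (simp add: Q_def comb_mat_def fun_eq_iff algebra_simps)
  have "homogeneous Q (\<lambda>_. 0)"
    using w(1,2) by (simp add: Q_def homogeneous_def word_shift_def fun_eq_iff)
  moreover have "diagonal_on W (comb_mat W M id Q)"
    using loop_word_diagonal[OF w(1,2)] by (auto simp: Q diagonal_on_def mat_one_def)
  moreover have "comb_mat W M id Q b b = 1" and "comb_mat W M id Q c c = 0"
    using w(3) b c by (simp_all add: Q mat_one_def \<mu>b_def \<mu>c_def)
  ultimately show ?thesis
    by blast
qed

lemma diagonal_comb_separating:
  assumes b: "b \<in> W"
  shows "finite A \<Longrightarrow> A \<subseteq> W - {b} \<Longrightarrow> \<exists>C. homogeneous C (\<lambda>_. 0) \<and>
    diagonal_on W (comb_mat W M id C) \<and> comb_mat W M id C b b = 1 \<and> (\<forall>c\<in>A. comb_mat W M id C c c = 0)"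
proof (induction A rule: finite_induct)
  case empty
  show ?case
    using b by (intro exI[of _ "[([], 1)]"])
      (simp add: homogeneous_def word_shift_def comb_mat_def diagonal_on_def mat_one_def fun_eq_iff)
next
  case (insert c A)
  then obtain C where C: "homogeneous C (\<lambda>_. 0)" "diagonal_on W (comb_mat W M id C)"
    "comb_mat W M id C b b = 1" "\<forall>c\<in>A. comb_mat W M id C c c = 0"
    by blast
  obtain Q where Q: "homogeneous Q (\<lambda>_. 0)" "diagonal_on W (comb_mat W M id Q)"
    "comb_mat W M id Q b b = 1" "comb_mat W M id Q c c = 0"
    using separating_comb[OF b] insert.prems by blast
  have CQ: "comb_mat W M id (comb_mult C Q) i k = mat_mul W (comb_mat W M id C) (comb_mat W M id Q) i k"
    if "k \<in> W" for i k
    using comb_mat_mult[OF finite_Wbasis that] .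
  have "homogeneous (comb_mult C Q) (\<lambda>_. 0)"
    using homogeneous_comb_mult[OF C(1) Q(1)] by simp
  moreover have "diagonal_on W (comb_mat W M id (comb_mult C Q))"
    using diagonal_on_mat_mul[OF finite_Wbasis C(2) Q(2)] CQ by (simp add: diagonal_on_def)
  moreover have "comb_mat W M id (comb_mult C Q) b b = 1"
    and "\<forall>c'\<in>insert c A. comb_mat W M id (comb_mult C Q) c' c' = 0"
    using CQ mat_mul_diagonal[OF finite_Wbasis C(2) Q(2)] C(3,4) Q(3,4) b insert.prems by auto
  ultimately show ?case
    by blast
qed

lemma projection_comb:
  assumes b: "b \<in> W"
  shows "\<exists>C. homogeneous C (\<lambda>_. 0) \<and> (\<forall>i\<in>W. \<forall>k\<in>W. comb_mat W M id C i k = mat_unit b b i k)"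
proof -
  obtain C where C: "homogeneous C (\<lambda>_. 0)" "diagonal_on W (comb_mat W M id C)"
    "comb_mat W M id C b b = 1" "\<forall>c\<in>W - {b}. comb_mat W M id C c c = 0"
    using diagonal_comb_separating[OF b finite_Diff[OF finite_Wbasis]] by blast
  have "comb_mat W M id C i k = mat_unit b b i k" if "i \<in> W" "k \<in> W" for i k
    using C(2-4) that unfolding diagonal_on_def mat_unit_def by (cases "i = k") auto
  then show ?thesis
    using C(1) by blast
qed

theorem matrix_unit_comb:
  assumes b: "b \<in> W" and b': "b' \<in> W"
  shows "\<exists>C. homogeneous C (\<lambda>q. int (b' q) - int (b q)) \<and>
    (\<forall>i\<in>W. \<forall>k\<in>W. comb_mat W M id C i k = mat_unit b' b i k)"
proof -
  obtain u where u: "set u \<subseteq> L" "run_word st u b = Some b'"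
    using connected_by_word[OF b b'] by blast
  define \<mu> where "\<mu> = word_mat W M u b' b"
  have "\<mu> \<noteq> 0"
    using word_mat_nonzero_iff[OF u(1)] u(2) b by (simp add: \<mu>_def)
  obtain P where P: "homogeneous P (\<lambda>_. 0)" "\<forall>i\<in>W. \<forall>k\<in>W. comb_mat W M id P i k = mat_unit b b i k"
    using projection_comb[OF b] by blast
  define C where "C = comb_mult [(u, inverse \<mu>)] P"
  have "homogeneous [(u, inverse \<mu>)] (\<lambda>q. int (b' q) - int (b q))"
    using run_word_SomeD[OF u(1) b u(2)] u(1) by (simp add: homogeneous_def fun_eq_iff)
  then have "homogeneous C (\<lambda>q. int (b' q) - int (b q))"
    using homogeneous_comb_mult[OF _ P(1)] by (fastforce simp: C_def)
  moreover have "comb_mat W M id C i k = mat_unit b' b i k" if i: "i \<in> W" and k: "k \<in> W" for i k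
  proof -
    have "comb_mat W M id C i k = mat_mul W (comb_mat W M id [(u, inverse \<mu>)]) (comb_mat W M id P) i k"
      unfolding C_def by (rule comb_mat_mult[OF finite_Wbasis k])
    also have "\<dots> = (\<Sum>j\<in>W. (inverse \<mu> * word_mat W M u i j) * mat_unit b b j k)"
      unfolding mat_mul_def using P(2) k
      by (intro sum.cong refl) (simp add: comb_mat_def[of _ _ _ "[(u, inverse \<mu>)]"])
    also have "\<dots> = (\<Sum>j\<in>W. if j = b then (if k = b then inverse \<mu> * word_mat W M u i b else 0) else 0)"
      by (intro sum.cong) (auto simp: mat_unit_def)
    also have "\<dots> = (if k = b then inverse \<mu> * word_mat W M u i b else 0)"
      using b by (simp add: finite_Wbasis)
    also have "\<dots> = mat_unit b' b i k"
      using word_mat_nonzero_iff[OF u(1), of i b] u(2) b \<open>\<mu> \<noteq> 0\<close>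
      by (auto simp: mat_unit_def \<mu>_def)
    finally show ?thesis .
  qed
  ultimately show ?thesis
    by blast
qed

end

lemma monomial_action_E:
  "2 \<le> n \<Longrightarrow> monomial_action n eps s {..<n} (stepE n eps s) (shiftE n) (\<lambda>i. Emat n eps s 1 i)"
  by unfold_locales (auto dest: stepE_SomeD intro: stepE_connected simp: Emat_nonzero_iff)

lemma monomial_action_F:
  "2 \<le> n \<Longrightarrow> monomial_action n eps s {..<n} (stepF n eps s) (\<lambda>i q. - shiftE n i q) (\<lambda>i. Fmat n eps s 1 i)"
  by unfold_locales (auto dest: stepF_SomeD intro: stepF_connected simp: Fmat_nonzero_iff)

section \<open>The generators on the tensor product\<close>

datatype gen = Egen (gen_index: nat) | Fgen (gen_index: nat)

text \<open>The matrix of \<open>f\<^sub>0\<close> is rescaled by \<open>x y\<close>; this does not change the invariant subspaces, but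
  makes all entries polynomial in \<open>x\<close> and \<open>y\<close>.\<close>

definition gen_mat :: "nat \<Rightarrow> (nat \<Rightarrow> bool) \<Rightarrow> nat \<Rightarrow> nat \<Rightarrow> K \<Rightarrow> K \<Rightarrow> gen \<Rightarrow> tb \<Rightarrow> tb \<Rightarrow> K" where
  "gen_mat n eps l m x y a = (case a of
     Egen i \<Rightarrow> TEmat n eps l m x y i
   | Fgen i \<Rightarrow> (\<lambda>u' u. (if i = 0 then x * y else 1) * TFmat n eps l m x y i u' u))"

text \<open>Each generator is the sum of a part acting on one tensor factor only (\<open>e\<^sub>i\<close> on the first,
  \<open>f\<^sub>i\<close> on the second) and a part that becomes negligible in the degeneration below.\<close>

definition lead_mat :: "nat \<Rightarrow> (nat \<Rightarrow> bool) \<Rightarrow> nat \<Rightarrow> nat \<Rightarrow> gen \<Rightarrow> tb \<Rightarrow> tb \<Rightarrow> K" where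
  "lead_mat n eps l m a u' u = (case a of
     Egen i \<Rightarrow> Emat n eps l 1 i (fst u') (fst u) * of_bool (snd u' = snd u)
   | Fgen i \<Rightarrow> of_bool (fst u' = fst u) * Fmat n eps m 1 i (snd u') (snd u))"

definition tail_mat :: "nat \<Rightarrow> (nat \<Rightarrow> bool) \<Rightarrow> nat \<Rightarrow> nat \<Rightarrow> gen \<Rightarrow> tb \<Rightarrow> tb \<Rightarrow> K" where
  "tail_mat n eps l m a u' u = (case a of
     Egen i \<Rightarrow> (if fst u' = fst u then inverse (kval n eps i (fst u)) else 0) * Emat n eps m 1 i (snd u') (snd u)
   | Fgen i \<Rightarrow> Fmat n eps l 1 i (fst u') (fst u) * (if snd u' = snd u then kval n eps i (snd u) else 0))"

lemma gen_mat_split: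
  assumes "x \<noteq> 0" "y \<noteq> 0"
  shows "gen_mat n eps l m x y a u' u = (if gen_index a = 0 then x else 1) * lead_mat n eps l m a u' u
    + (if gen_index a = 0 then y else 1) * tail_mat n eps l m a u' u"
proof (cases a)
  case (Egen i)
  then show ?thesis
    by (simp add: gen_mat_def lead_mat_def tail_mat_def TEmat_def Emat_scale[of n eps l x]
        Emat_scale[of n eps m y] mult_ac)
next
  case (Fgen i)
  then show ?thesis
    using assms by (simp add: gen_mat_def lead_mat_def tail_mat_def TFmat_def Fmat_scale[of n eps l x]
        Fmat_scale[of n eps m y] field_simps)
qed

text \<open>The same matrices over \<open>K[x][y]\<close>: the inner variable is \<open>x\<close>, the outer one \<open>y\<close>.\<close>

definition sym_gen_mat :: "nat \<Rightarrow> (nat \<Rightarrow> bool) \<Rightarrow> nat \<Rightarrow> nat \<Rightarrow> gen \<Rightarrow> tb \<Rightarrow> tb \<Rightarrow> K poly poly" where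
  "sym_gen_mat n eps l m a u' u =
     [:[:lead_mat n eps l m a u' u:]:] * (if gen_index a = 0 then [:[:0, 1:]:] else 1)
   + [:[:tail_mat n eps l m a u' u:]:] * (if gen_index a = 0 then [:0, 1:] else 1)"

definition eval_xy :: "K \<Rightarrow> K \<Rightarrow> K poly poly \<Rightarrow> K" where
  "eval_xy x y P = poly (map_poly (\<lambda>c. poly c x) P) y"

lemma comm_ring_hom_eval_xy: "comm_ring_hom (eval_xy x y)"
proof -
  interpret map_poly_comm_ring_hom "\<lambda>c :: K poly. poly c x" ..
  show ?thesis
    by unfold_locales (simp_all add: eval_xy_def hom_add hom_mult)
qed

lemma eval_xy_const [simp]: "eval_xy x y [:[:c:]:] = c"
  by (cases "c = 0") (simp_all add: eval_xy_def map_poly_pCons)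

lemma eval_sym_gen_mat:
  assumes "x \<noteq> 0" "y \<noteq> 0"
  shows "eval_xy x y (sym_gen_mat n eps l m a u' u) = gen_mat n eps l m x y a u' u"
proof -
  interpret comm_ring_hom "eval_xy x y"
    by (rule comm_ring_hom_eval_xy)
  have "eval_xy x y [:[:0, 1:]:] = x" "eval_xy x y [:0, 1:] = y"
    by (simp_all add: eval_xy_def map_poly_pCons)
  then show ?thesis
    using assms unfolding sym_gen_mat_def hom_add hom_mult
    by (cases "gen_index a = 0") (simp_all add: gen_mat_split)
qed

section \<open>A degeneration of the tensor product\<close>

definition s_var :: "K poly fract" where
  "s_var = to_fract [:0, 1:]"

definition degen :: "nat \<Rightarrow> K poly poly \<Rightarrow> K poly fract" where
  "degen n P = poly (map_poly (\<lambda>c. to_fract [:poly c 1:]) P) (s_var ^ n)"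

lemma comm_ring_hom_degen: "comm_ring_hom (degen n)"
proof -
  interpret coeff: comm_ring_hom "\<lambda>c :: K poly. to_fract [:poly c 1:]"
  proof unfold_locales
    fix a b :: "K poly"
    have "[:poly (a + b) 1:] = [:poly a 1:] + [:poly b 1:]" "[:poly (a * b) 1:] = [:poly a 1:] * [:poly b 1:]"
      by simp_all
    then show "to_fract [:poly (a + b) 1:] = to_fract [:poly a 1:] + to_fract [:poly b 1:]"
      "to_fract [:poly (a * b) 1:] = to_fract [:poly a 1:] * to_fract [:poly b 1:]"
      by (simp_all only: to_fract_add to_fract_mult)
  qed (simp_all flip: one_pCons)
  interpret map_poly_comm_ring_hom "\<lambda>c :: K poly. to_fract [:poly c 1:]" ..
  show ?thesis
    by unfold_locales (simp_all add: degen_def hom_add hom_mult)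
qed

lemma degen_const [simp]: "degen n [:[:c:]:] = to_fract [:c:]"
  by (cases "c = 0") (simp_all add: degen_def map_poly_pCons)

lemma degen_sym_gen_mat:
  "degen n (sym_gen_mat n eps l m a u' u) = to_fract [:lead_mat n eps l m a u' u:]
     + to_fract [:tail_mat n eps l m a u' u:] * s_var ^ (if gen_index a = 0 then n else 0)"
proof -
  interpret comm_ring_hom "degen n"
    by (rule comm_ring_hom_degen)
  have "degen n [:[:0, 1:]:] = 1" "degen n [:0, 1:] = s_var ^ n"
    by (simp_all add: degen_def map_poly_pCons flip: one_pCons)
  then show ?thesis
    unfolding sym_gen_mat_def hom_add hom_mult by (cases "gen_index a = 0") simp_all
qed

definition weight :: "nat \<Rightarrow> (nat \<Rightarrow> nat) \<Rightarrow> int" where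
  "weight n b = (\<Sum>p=1..n. (int p - 1) * int (b p))"

definition gen_deg :: "nat \<Rightarrow> gen \<Rightarrow> int" where
  "gen_deg n a = (case a of Egen i \<Rightarrow> if i = 0 then int n - 1 else - 1 | Fgen i \<Rightarrow> 0)"

lemma weight_shift:
  "(\<forall>q. int (b' q) = int (b q) + \<delta> q) \<Longrightarrow> weight n b' = weight n b + (\<Sum>p=1..n. (int p - 1) * \<delta> p)"
  by (simp add: weight_def distrib_left sum.distrib)

lemma sum_weight_shiftE:
  assumes "2 \<le> n" "i < n"
  shows "(\<Sum>p=1..n. (int p - 1) * shiftE n i p) = gen_deg n (Egen i)"
proof -
  have "(int p - 1) * shiftE n i p
      = (if p = idx n i then int p - 1 else 0) - (if p = idx n (i + 1) then int p - 1 else 0)" for p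
    by (simp add: shiftE_def algebra_simps)
  then have "(\<Sum>p=1..n. (int p - 1) * shiftE n i p)
      = (\<Sum>p=1..n. if p = idx n i then int p - 1 else 0) - (\<Sum>p=1..n. if p = idx n (i + 1) then int p - 1 else 0)"
    by (simp add: sum_subtractf)
  also have "\<dots> = (int (idx n i) - 1) - (int (idx n (i + 1)) - 1)"
    using idx_in_range[of n] assms(1) by simp
  finally show ?thesis
    using assms idx_less[of i n] idx_Suc[of i n] by (simp add: gen_deg_def)
qed

lemma lead_mat_weight:
  assumes n: "2 \<le> n" and a: "gen_index a < n" and nz: "lead_mat n eps l m a u' u \<noteq> 0"
  shows "weight n (fst u') = weight n (fst u) + gen_deg n a"
proof (cases a)
  case (Egen i)
  then have "stepE n eps l i (fst u) = Some (fst u')"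
    using nz a Emat_nonzero_iff[OF n] by (auto simp: lead_mat_def)
  then have "\<forall>q. int (fst u' q) = int (fst u q) + shiftE n i q"
    using stepE_SomeD[OF n] a Egen by simp
  then have "weight n (fst u') = weight n (fst u) + (\<Sum>p=1..n. (int p - 1) * shiftE n i p)"
    by (rule weight_shift)
  then show ?thesis
    using sum_weight_shiftE[OF n] a Egen by simp
next
  case (Fgen i)
  then show ?thesis
    using nz by (auto simp: lead_mat_def gen_deg_def)
qed

lemma tail_mat_weight:
  assumes n: "2 \<le> n" and a: "gen_index a < n" and nz: "tail_mat n eps l m a u' u \<noteq> 0"
  shows "weight n (fst u') + (if gen_index a = 0 then int n else 0) = weight n (fst u) + gen_deg n a + 1"
proof (cases a)
  case (Egen i)
  then have "fst u' = fst u"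
    using nz by (auto simp: tail_mat_def split: if_splits)
  then show ?thesis
    using Egen by (simp add: gen_deg_def)
next
  case (Fgen i)
  then have "stepF n eps l i (fst u) = Some (fst u')"
    using nz Fmat_nonzero_iff by (auto simp: tail_mat_def)
  then have "\<forall>q. int (fst u' q) = int (fst u q) + - shiftE n i q"
    using stepF_SomeD[OF n] a Fgen by simp
  then have "weight n (fst u') = weight n (fst u) + (\<Sum>p=1..n. (int p - 1) * - shiftE n i p)"
    by (rule weight_shift)
  then have "weight n (fst u') = weight n (fst u) - gen_deg n (Egen i)"
    using sum_weight_shiftE[OF n] a Fgen by (simp add: sum_negf)
  then show ?thesis
    using Fgen by (simp add: gen_deg_def)
qed

definition lim_gen_mat :: "nat \<Rightarrow> (nat \<Rightarrow> bool) \<Rightarrow> nat \<Rightarrow> nat \<Rightarrow> gen \<Rightarrow> tb \<Rightarrow> tb \<Rightarrow> K poly" where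
  "lim_gen_mat n eps l m a u' u = [:lead_mat n eps l m a u' u, tail_mat n eps l m a u' u:]"

lemma s_var_powi_linear:
  assumes c1: "c1 \<noteq> 0 \<Longrightarrow> e = 0" and c2: "c2 \<noteq> 0 \<Longrightarrow> e + 1 = int k"
  shows "s_var powi e * to_fract [:c1, c2:] = to_fract [:c1:] + to_fract [:c2:] * s_var ^ k"
proof -
  have lin: "to_fract [:c1, c2:] = to_fract [:c1:] + s_var * to_fract [:c2:]"
    by (simp add: s_var_def flip: to_fract_mult to_fract_add)
  have "s_var \<noteq> 0"
    by (simp add: s_var_def)
  then have "s_var powi e * s_var = s_var powi (e + 1)"
    by (simp add: power_int_add)
  then have "s_var powi e * s_var = s_var ^ k" if "c2 \<noteq> 0"
    using c2[OF that] by simp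
  then show ?thesis
    unfolding lin using c1 by (cases "c1 = 0"; cases "c2 = 0") (simp_all add: algebra_simps)
qed

lemma degen_sym_gen_mat_scaled:
  assumes "2 \<le> n" "gen_index a < n"
  shows "degen n (sym_gen_mat n eps l m a u' u)
    = s_var powi (weight n (fst u) - weight n (fst u') + gen_deg n a) * to_fract (lim_gen_mat n eps l m a u' u)"
  unfolding degen_sym_gen_mat lim_gen_mat_def
  by (rule s_var_powi_linear[symmetric]) (use lead_mat_weight[OF assms, of eps l m u' u] tail_mat_weight[OF assms, of eps l m u' u] in auto)

definition word_deg :: "nat \<Rightarrow> gen list \<Rightarrow> int" where
  "word_deg n w = (\<Sum>a\<leftarrow>w. gen_deg n a)"

definition graded_comb :: "nat \<Rightarrow> int \<Rightarrow> (gen list \<times> K) list \<Rightarrow> bool" where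
  "graded_comb n D C \<longleftrightarrow> (\<forall>(w, c)\<in>set C. (\<forall>a\<in>set w. gen_index a < n) \<and> word_deg n w = D)"

lemma degen_word_mat:
  assumes B: "finite B" and n: "2 \<le> n"
  shows "\<forall>a\<in>set w. gen_index a < n \<Longrightarrow> degen n (word_mat B (sym_gen_mat n eps l m) w u' u)
    = s_var powi (weight n (fst u) - weight n (fst u') + word_deg n w) * to_fract (word_mat B (lim_gen_mat n eps l m) w u' u)"
proof (induction w arbitrary: u)
  case Nil
  interpret comm_ring_hom "degen n"
    by (rule comm_ring_hom_degen)
  show ?case
    by (simp add: mat_one_def word_deg_def)
next
  case (Cons a w)
  interpret comm_ring_hom "degen n"
    by (rule comm_ring_hom_degen)
  let ?e = "\<lambda>v v'. weight n (fst v) - weight n (fst v')"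
  have a: "gen_index a < n"
    using Cons.prems by simp
  have "degen n (word_mat B (sym_gen_mat n eps l m) (a # w) u' u)
      = (\<Sum>v\<in>B. s_var powi (?e v u' + word_deg n w) * to_fract (word_mat B (lim_gen_mat n eps l m) w u' v)
          * (s_var powi (?e u v + gen_deg n a) * to_fract (lim_gen_mat n eps l m a v u)))"
    using Cons degen_sym_gen_mat_scaled[OF n a] by (simp add: mat_mul_def hom_sum hom_mult)
  also have "\<dots> = (\<Sum>v\<in>B. s_var powi (?e u u' + word_deg n (a # w))
      * to_fract (word_mat B (lim_gen_mat n eps l m) w u' v * lim_gen_mat n eps l m a v u))"
    by (intro sum.cong refl) (simp add: word_deg_def power_int_add[symmetric] s_var_def algebra_simps)
  also have "\<dots> = s_var powi (?e u u' + word_deg n (a # w)) * to_fract (word_mat B (lim_gen_mat n eps l m) (a # w) u' u)"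
    by (simp add: mat_mul_def sum_distrib_left)
  finally show ?case .
qed

lemma degen_comb_mat:
  assumes "finite B" "2 \<le> n" "graded_comb n D C"
  shows "degen n (comb_mat B (sym_gen_mat n eps l m) (\<lambda>c. [:[:c:]:]) C u' u)
    = s_var powi (weight n (fst u) - weight n (fst u') + D) * to_fract (comb_mat B (lim_gen_mat n eps l m) (\<lambda>c. [:c:]) C u' u)"
proof -
  interpret comm_ring_hom "degen n"
    by (rule comm_ring_hom_degen)
  let ?s = "s_var powi (weight n (fst u) - weight n (fst u') + D)"
  have "degen n ([:[:snd p:]:] * word_mat B (sym_gen_mat n eps l m) (fst p) u' u)
      = ?s * to_fract ([:snd p:] * word_mat B (lim_gen_mat n eps l m) (fst p) u' u)" if "p \<in> set C" for p
  proof -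
    have "\<forall>a\<in>set (fst p). gen_index a < n" "word_deg n (fst p) = D"
      using assms(3) that by (auto simp: graded_comb_def)
    then show ?thesis
      by (simp only: hom_mult degen_const degen_word_mat[OF assms(1,2)] to_fract_mult mult_ac)
  qed
  then show ?thesis
    unfolding comb_mat_def case_prod_unfold hom_sum_list to_fract_hom.hom_sum_list sum_list_const_mult[symmetric]
    by (simp add: comp_def cong: map_cong)
qed

lemma comb_mat_lim_gen_at_0:
  "poly (comb_mat B (lim_gen_mat n eps l m) (\<lambda>c. [:c:]) C u' u) 0 = comb_mat B (lead_mat n eps l m) id C u' u"
  by (simp add: poly_hom.hom_comb_mat lim_gen_mat_def id_def)

section \<open>Matrix units in the degenerate limit\<close>

abbreviation tensor_basis :: "nat \<Rightarrow> (nat \<Rightarrow> bool) \<Rightarrow> nat \<Rightarrow> nat \<Rightarrow> tb set" where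
  "tensor_basis n eps l m \<equiv> Wbasis n eps l \<times> Wbasis n eps m"

lemma finite_tensor_basis: "finite (tensor_basis n eps l m)"
  by (simp add: finite_Wbasis)

lemma lead_word_mat:
  assumes "u' \<in> tensor_basis n eps l m" "u \<in> tensor_basis n eps l m"
  shows "word_mat (tensor_basis n eps l m) (lead_mat n eps l m) (map Egen es @ map Fgen fs) u' u
    = word_mat (Wbasis n eps l) (\<lambda>i. Emat n eps l 1 i) es (fst u') (fst u)
      * word_mat (Wbasis n eps m) (\<lambda>i. Fmat n eps m 1 i) fs (snd u') (snd u)"
proof -
  let ?B = "tensor_basis n eps l m"
  have lead_E: "(\<lambda>i. lead_mat n eps l m (Egen i)) = (\<lambda>i u' u. Emat n eps l 1 i (fst u') (fst u) * of_bool (snd u' = snd u))"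
    and lead_F: "(\<lambda>i. lead_mat n eps l m (Fgen i)) = (\<lambda>i u' u. of_bool (fst u' = fst u) * Fmat n eps m 1 i (snd u') (snd u))"
    by (simp_all add: fun_eq_iff lead_mat_def)
  have E: "word_mat ?B (lead_mat n eps l m) (map Egen es) v u
      = word_mat (Wbasis n eps l) (\<lambda>i. Emat n eps l 1 i) es (fst v) (fst u) * of_bool (snd v = snd u)" for v
    unfolding word_mat_map lead_E
    by (rule word_mat_kron_id_right[OF finite_Wbasis]) (use assms(2) in \<open>simp add: mem_Times_iff\<close>)
  have F: "word_mat ?B (lead_mat n eps l m) (map Fgen fs) u' v
      = of_bool (fst u' = fst v) * word_mat (Wbasis n eps m) (\<lambda>i. Fmat n eps m 1 i) fs (snd u') (snd v)"
    if "v \<in> ?B" for v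
    unfolding word_mat_map lead_F
    by (rule word_mat_kron_id_left[OF finite_Wbasis]) (use that in \<open>simp add: mem_Times_iff\<close>)
  have "word_mat ?B (lead_mat n eps l m) (map Egen es @ map Fgen fs) u' u
      = mat_mul ?B (word_mat ?B (lead_mat n eps l m) (map Fgen fs)) (word_mat ?B (lead_mat n eps l m) (map Egen es)) u' u"
    by (rule word_mat_append[OF finite_tensor_basis assms(2)])
  also have "\<dots> = mat_mul ?B (\<lambda>u' v. of_bool (fst u' = fst v) * word_mat (Wbasis n eps m) (\<lambda>i. Fmat n eps m 1 i) fs (snd u') (snd v))
      (\<lambda>v u. word_mat (Wbasis n eps l) (\<lambda>i. Emat n eps l 1 i) es (fst v) (fst u) * of_bool (snd v = snd u)) u' u"
    unfolding mat_mul_def using E F by (intro sum.cong refl) simp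
  also have "\<dots> = word_mat (Wbasis n eps l) (\<lambda>i. Emat n eps l 1 i) es (fst u') (fst u)
      * word_mat (Wbasis n eps m) (\<lambda>i. Fmat n eps m 1 i) fs (snd u') (snd u)"
    using assms by (intro mat_mul_kron) (auto simp: finite_Wbasis mem_Times_iff)
  finally show ?thesis .
qed

definition tensor_comb :: "(nat list \<times> K) list \<Rightarrow> (nat list \<times> K) list \<Rightarrow> (gen list \<times> K) list" where
  "tensor_comb Ce Cf = concat (map (\<lambda>(es, ce). map (\<lambda>(fs, cf). (map Egen es @ map Fgen fs, ce * cf)) Cf) Ce)"

lemma lead_comb_mat_tensor:
  assumes "u' \<in> tensor_basis n eps l m" "u \<in> tensor_basis n eps l m"
  shows "comb_mat (tensor_basis n eps l m) (lead_mat n eps l m) id (tensor_comb Ce Cf) u' u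
    = comb_mat (Wbasis n eps l) (\<lambda>i. Emat n eps l 1 i) id Ce (fst u') (fst u)
      * comb_mat (Wbasis n eps m) (\<lambda>i. Fmat n eps m 1 i) id Cf (snd u') (snd u)"
proof -
  let ?E = "\<lambda>es. word_mat (Wbasis n eps l) (\<lambda>i. Emat n eps l 1 i) es (fst u') (fst u)"
  let ?F = "\<lambda>fs. word_mat (Wbasis n eps m) (\<lambda>i. Fmat n eps m 1 i) fs (snd u') (snd u)"
  have "comb_mat (tensor_basis n eps l m) (lead_mat n eps l m) id (tensor_comb Ce Cf) u' u
      = (\<Sum>p\<leftarrow>Ce. \<Sum>p'\<leftarrow>Cf. (snd p * ?E (fst p)) * (snd p' * ?F (fst p')))"
    by (simp add: comb_mat_def tensor_comb_def sum_list_concat_map case_prod_unfold comp_def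
        lead_word_mat[OF assms] ac_simps)
  also have "\<dots> = comb_mat (Wbasis n eps l) (\<lambda>i. Emat n eps l 1 i) id Ce (fst u') (fst u)
      * comb_mat (Wbasis n eps m) (\<lambda>i. Fmat n eps m 1 i) id Cf (snd u') (snd u)"
    unfolding comb_mat_def case_prod_unfold id_def sum_list_mult_const[symmetric]
    unfolding sum_list_const_mult[symmetric] ..
  finally show ?thesis .
qed

lemma word_deg_tensor:
  assumes "2 \<le> n" "set es \<subseteq> {..<n}"
  shows "word_deg n (map Egen es @ map Fgen fs)
    = (\<Sum>p=1..n. (int p - 1) * (\<Sum>i\<leftarrow>es. shiftE n i p))"
proof -
  have "word_deg n (map Egen es @ map Fgen fs) = (\<Sum>i\<leftarrow>es. gen_deg n (Egen i))"
    by (simp add: word_deg_def comp_def gen_deg_def)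
  also have "\<dots> = (\<Sum>i\<leftarrow>es. \<Sum>p=1..n. (int p - 1) * shiftE n i p)"
    using assms sum_weight_shiftE[OF assms(1)] by (intro arg_cong[where f = sum_list] map_cong) auto
  finally have "word_deg n (map Egen es @ map Fgen fs) = (\<Sum>i\<leftarrow>es. \<Sum>p=1..n. (int p - 1) * shiftE n i p)" .
  then show ?thesis
    by (simp add: sum_list_sum_swap sum_list_const_mult)
qed

lemma graded_tensor_comb:
  assumes n: "2 \<le> n"
    and Ce: "\<forall>(es, ce)\<in>set Ce. set es \<subseteq> {..<n} \<and> (\<forall>p. (\<Sum>i\<leftarrow>es. shiftE n i p) = int (b' p) - int (b p))"
    and Cf: "\<forall>(fs, cf)\<in>set Cf. set fs \<subseteq> {..<n}"
  shows "graded_comb n (weight n b' - weight n b) (tensor_comb Ce Cf)"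
  unfolding graded_comb_def
proof (clarify)
  fix w c assume "(w, c) \<in> set (tensor_comb Ce Cf)"
  then obtain es ce fs cf where e: "(es, ce) \<in> set Ce" and f: "(fs, cf) \<in> set Cf"
    and w: "w = map Egen es @ map Fgen fs"
    by (auto simp: tensor_comb_def)
  have es: "set es \<subseteq> {..<n}" "\<forall>p. (\<Sum>i\<leftarrow>es. shiftE n i p) = int (b' p) - int (b p)"
    using Ce e by auto
  have "word_deg n w = weight n b' - weight n b"
    using word_deg_tensor[OF n es(1)] es(2) w by (simp add: weight_def right_diff_distrib sum_subtractf)
  moreover have "set fs \<subseteq> {..<n}"
    using Cf f by auto
  ultimately show "(\<forall>a\<in>set w. gen_index a < n) \<and> word_deg n w = weight n b' - weight n b"
    using es(1) w by auto
qed

definition pair_deg :: "nat \<Rightarrow> tb \<times> tb \<Rightarrow> int" where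
  "pair_deg n \<tau> = weight n (fst (fst \<tau>)) - weight n (fst (snd \<tau>))"

definition lead_unit :: "nat \<Rightarrow> (nat \<Rightarrow> bool) \<Rightarrow> nat \<Rightarrow> nat \<Rightarrow> tb \<times> tb \<Rightarrow> (gen list \<times> K) list \<Rightarrow> bool" where
  "lead_unit n eps l m \<tau> C \<longleftrightarrow> graded_comb n (pair_deg n \<tau>) C \<and>
     (\<forall>u'\<in>tensor_basis n eps l m. \<forall>u\<in>tensor_basis n eps l m.
        comb_mat (tensor_basis n eps l m) (lead_mat n eps l m) id C u' u = mat_unit (fst \<tau>) (snd \<tau>) u' u)"

lemma lead_unit_exists:
  assumes n: "2 \<le> n" and t: "t \<in> tensor_basis n eps l m" and t': "t' \<in> tensor_basis n eps l m"
  shows "\<exists>C. lead_unit n eps l m (t', t) C"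
proof -
  interpret E: monomial_action n eps l "{..<n}" "stepE n eps l" "shiftE n" "\<lambda>i. Emat n eps l 1 i"
    by (rule monomial_action_E[OF n])
  interpret F: monomial_action n eps m "{..<n}" "stepF n eps m" "\<lambda>i q. - shiftE n i q" "\<lambda>i. Fmat n eps m 1 i"
    by (rule monomial_action_F[OF n])
  obtain Ce where Ce: "E.homogeneous Ce (\<lambda>q. int (fst t' q) - int (fst t q))"
    "\<forall>i\<in>E.W. \<forall>k\<in>E.W. comb_mat E.W (\<lambda>i. Emat n eps l 1 i) id Ce i k = mat_unit (fst t') (fst t) i k"
    using E.matrix_unit_comb[of "fst t" "fst t'"] t t' unfolding mem_Times_iff by blast
  obtain Cf where Cf: "F.homogeneous Cf (\<lambda>q. int (snd t' q) - int (snd t q))"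
    "\<forall>i\<in>F.W. \<forall>k\<in>F.W. comb_mat F.W (\<lambda>i. Fmat n eps m 1 i) id Cf i k = mat_unit (snd t') (snd t) i k"
    using F.matrix_unit_comb[of "snd t" "snd t'"] t t' unfolding mem_Times_iff by blast
  have "graded_comb n (weight n (fst t') - weight n (fst t)) (tensor_comb Ce Cf)"
    using Ce(1) Cf(1) by (intro graded_tensor_comb[OF n])
      (auto simp: E.homogeneous_def F.homogeneous_def E.word_shift_def fun_eq_iff)
  moreover have "comb_mat (tensor_basis n eps l m) (lead_mat n eps l m) id (tensor_comb Ce Cf) u' u = mat_unit t' t u' u"
    if "u' \<in> tensor_basis n eps l m" "u \<in> tensor_basis n eps l m" for u' u
    using that Ce(2) Cf(2) by (auto simp: lead_comb_mat_tensor mat_unit_def mem_Times_iff prod_eq_iff)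
  ultimately show ?thesis
    by (intro exI[of _ "tensor_comb Ce Cf"]) (simp add: lead_unit_def pair_deg_def)
qed

section \<open>The polynomial \<open>P\<close>\<close>

definition pair_list :: "'a set \<Rightarrow> ('a \<times> 'a) list" where
  "pair_list B = (SOME ps. set ps = B \<times> B \<and> distinct ps)"

lemma pair_list: "finite B \<Longrightarrow> set (pair_list B) = B \<times> B \<and> distinct (pair_list B)"
  unfolding pair_list_def by (rule someI_ex) (simp add: finite_distinct_list)

abbreviation tensor_pairs :: "nat \<Rightarrow> (nat \<Rightarrow> bool) \<Rightarrow> nat \<Rightarrow> nat \<Rightarrow> (tb \<times> tb) list" where
  "tensor_pairs n eps l m \<equiv> pair_list (tensor_basis n eps l m)"

lemma tensor_pairs_nth:
  assumes "r < length (tensor_pairs n eps l m)"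
  shows "fst (tensor_pairs n eps l m ! r) \<in> tensor_basis n eps l m"
    and "snd (tensor_pairs n eps l m ! r) \<in> tensor_basis n eps l m"
  using pair_list[OF finite_tensor_basis] nth_mem[OF assms] by (metis mem_Times_iff)+

definition unit_comb :: "nat \<Rightarrow> (nat \<Rightarrow> bool) \<Rightarrow> nat \<Rightarrow> nat \<Rightarrow> tb \<times> tb \<Rightarrow> (gen list \<times> K) list" where
  "unit_comb n eps l m \<tau> = (SOME C. lead_unit n eps l m \<tau> C)"

lemma lead_unit_unit_comb:
  assumes "2 \<le> n" "fst \<tau> \<in> tensor_basis n eps l m" "snd \<tau> \<in> tensor_basis n eps l m"
  shows "lead_unit n eps l m \<tau> (unit_comb n eps l m \<tau>)"
  using lead_unit_exists[OF assms(1,3,2)] unfolding unit_comb_def by (simp add: someI_ex)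

lemma graded_unit_comb:
  "2 \<le> n \<Longrightarrow> fst \<tau> \<in> tensor_basis n eps l m \<Longrightarrow> snd \<tau> \<in> tensor_basis n eps l m \<Longrightarrow>
    graded_comb n (pair_deg n \<tau>) (unit_comb n eps l m \<tau>)"
  using lead_unit_unit_comb by (simp add: lead_unit_def)

lemma lead_comb_mat_unit_comb:
  assumes "2 \<le> n" "fst \<tau> \<in> tensor_basis n eps l m" "snd \<tau> \<in> tensor_basis n eps l m"
    and "u' \<in> tensor_basis n eps l m" "u \<in> tensor_basis n eps l m"
  shows "comb_mat (tensor_basis n eps l m) (lead_mat n eps l m) id (unit_comb n eps l m \<tau>) u' u
    = mat_unit (fst \<tau>) (snd \<tau>) u' u"
proof -
  have units: "\<forall>u'\<in>tensor_basis n eps l m. \<forall>u\<in>tensor_basis n eps l m.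
      comb_mat (tensor_basis n eps l m) (lead_mat n eps l m) id (unit_comb n eps l m \<tau>) u' u
        = mat_unit (fst \<tau>) (snd \<tau>) u' u"
    using lead_unit_unit_comb[OF assms(1-3)] unfolding lead_unit_def by (rule conjunct2)
  show ?thesis
    using bspec[OF bspec[OF units assms(4)] assms(5)] .
qed

text \<open>Column \<open>\<tau>\<close> of \<open>sym_matrix\<close> lists the entries of the action of \<open>unit_comb \<tau>\<close> on the
  tensor product, as polynomials in \<open>x\<close> and \<open>y\<close>; \<open>lim_matrix\<close> is its degeneration.\<close>

definition sym_matrix :: "nat \<Rightarrow> (nat \<Rightarrow> bool) \<Rightarrow> nat \<Rightarrow> nat \<Rightarrow> K poly poly mat" where
  "sym_matrix n eps l m = (let ps = tensor_pairs n eps l m in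
     mat (length ps) (length ps) (\<lambda>(r, j). comb_mat (tensor_basis n eps l m) (sym_gen_mat n eps l m)
       (\<lambda>c. [:[:c:]:]) (unit_comb n eps l m (ps ! j)) (fst (ps ! r)) (snd (ps ! r))))"

definition lim_matrix :: "nat \<Rightarrow> (nat \<Rightarrow> bool) \<Rightarrow> nat \<Rightarrow> nat \<Rightarrow> K poly mat" where
  "lim_matrix n eps l m = (let ps = tensor_pairs n eps l m in
     mat (length ps) (length ps) (\<lambda>(r, j). comb_mat (tensor_basis n eps l m) (lim_gen_mat n eps l m)
       (\<lambda>c. [:c:]) (unit_comb n eps l m (ps ! j)) (fst (ps ! r)) (snd (ps ! r))))"

lemma lim_matrix_at_0:
  assumes "2 \<le> n"
  shows "map_mat (\<lambda>p. poly p 0) (lim_matrix n eps l m) = 1\<^sub>m (length (tensor_pairs n eps l m))"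
proof (rule eq_matI)
  let ?ps = "tensor_pairs n eps l m"
  fix r j assume "r < dim_row (1\<^sub>m (length ?ps) :: K mat)" "j < dim_col (1\<^sub>m (length ?ps) :: K mat)"
  then have rj: "r < length ?ps" "j < length ?ps"
    by simp_all
  have "comb_mat (tensor_basis n eps l m) (lead_mat n eps l m) id (unit_comb n eps l m (?ps ! j)) (fst (?ps ! r)) (snd (?ps ! r))
      = mat_unit (fst (?ps ! j)) (snd (?ps ! j)) (fst (?ps ! r)) (snd (?ps ! r))"
    using lead_comb_mat_unit_comb[OF assms tensor_pairs_nth[OF rj(2)] tensor_pairs_nth[OF rj(1)]] .
  then have "map_mat (\<lambda>p. poly p 0) (lim_matrix n eps l m) $$ (r, j) = mat_unit (fst (?ps ! j)) (snd (?ps ! j)) (fst (?ps ! r)) (snd (?ps ! r))"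
    using rj by (simp add: lim_matrix_def Let_def comb_mat_lim_gen_at_0)
  also have "\<dots> = of_bool (?ps ! r = ?ps ! j)"
    by (simp add: mat_unit_def prod_eq_iff)
  also have "\<dots> = 1\<^sub>m (length ?ps) $$ (r, j)"
    using rj nth_eq_iff_index_eq[of ?ps r j] pair_list[OF finite_tensor_basis] by simp
  finally show "map_mat (\<lambda>p. poly p 0) (lim_matrix n eps l m) $$ (r, j) = 1\<^sub>m (length ?ps) $$ (r, j)" .
qed (simp_all add: lim_matrix_def Let_def)

lemma degen_sym_matrix:
  assumes n: "2 \<le> n" and rj: "r < length (tensor_pairs n eps l m)" "j < length (tensor_pairs n eps l m)"
  shows "s_var powi pair_deg n (tensor_pairs n eps l m ! r) * degen n (sym_matrix n eps l m $$ (r, j))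
    = to_fract (lim_matrix n eps l m $$ (r, j)) * s_var powi pair_deg n (tensor_pairs n eps l m ! j)"
proof -
  let ?ps = "tensor_pairs n eps l m" and ?C = "unit_comb n eps l m (tensor_pairs n eps l m ! j)"
  let ?u' = "fst (?ps ! r)" and ?u = "snd (?ps ! r)"
  let ?e = "weight n (fst ?u) - weight n (fst ?u') + pair_deg n (?ps ! j)"
  have "s_var powi pair_deg n (?ps ! r) * s_var powi ?e = s_var powi pair_deg n (?ps ! j)"
    by (simp add: s_var_def pair_deg_def flip: power_int_add)
  moreover have "degen n (sym_matrix n eps l m $$ (r, j))
      = s_var powi ?e * to_fract (comb_mat (tensor_basis n eps l m) (lim_gen_mat n eps l m) (\<lambda>c. [:c:]) ?C ?u' ?u)"
    using rj degen_comb_mat[OF finite_tensor_basis n graded_unit_comb[OF n tensor_pairs_nth[OF rj(2)]]]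
    by (simp add: sym_matrix_def Let_def)
  ultimately show ?thesis
    using rj by (simp add: lim_matrix_def Let_def mult.assoc[symmetric] mult.commute)
qed

theorem det_sym_matrix_nonzero:
  assumes n: "2 \<le> n"
  shows "det (sym_matrix n eps l m) \<noteq> 0"
proof -
  let ?k = "length (tensor_pairs n eps l m)"
  let ?s = "\<lambda>r. s_var powi pair_deg n (tensor_pairs n eps l m ! r)"
  have "(\<Prod>r<?k. ?s r) * det (map_mat (degen n) (sym_matrix n eps l m))
      = det (map_mat to_fract (lim_matrix n eps l m)) * (\<Prod>j<?k. ?s j)"
    using degen_sym_matrix[OF n] by (intro det_diagonal_scaling) (simp_all add: sym_matrix_def lim_matrix_def Let_def)
  moreover have "det (lim_matrix n eps l m) \<noteq> 0"
    using lim_matrix_at_0[OF n] by (intro det_nonzero_if_constant_coeffs_one) (simp_all add: lim_matrix_def Let_def)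
  moreover have "s_var \<noteq> 0"
    by (simp add: s_var_def)
  ultimately have "degen n (det (sym_matrix n eps l m)) \<noteq> 0"
    by (simp add: comm_ring_hom.hom_det[OF comm_ring_hom_degen])
  then show ?thesis
    by (metis degen_const pCons_0_0 to_fract_0)
qed

lemma preserves_gen_mat:
  assumes inv: "invariant_subspace (tensor_basis n eps l m) (tensor_gens n eps l m x y) S"
    and a: "gen_index a < n"
  shows "preserves (tensor_basis n eps l m) S (gen_mat n eps l m x y a)"
proof (cases a)
  case (Egen i)
  then have "TEmat n eps l m x y i \<in> tensor_gens n eps l m x y"
    using a by (auto simp: tensor_gens_def)
  then show ?thesis
    using preserves_generator[OF inv finite_tensor_basis] Egen by (simp add: gen_mat_def)
next
  case (Fgen i)
  then have "TFmat n eps l m x y i \<in> tensor_gens n eps l m x y"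
    using a by (auto simp: tensor_gens_def)
  then show ?thesis
    using preserves_scale[OF inv finite_tensor_basis preserves_generator[OF inv finite_tensor_basis]] Fgen
    by (simp add: gen_mat_def)
qed

lemma eval_comb_mat:
  assumes "x \<noteq> 0" "y \<noteq> 0"
  shows "eval_xy x y (comb_mat B (sym_gen_mat n eps l m) (\<lambda>c. [:[:c:]:]) C u' u) = comb_mat B (gen_mat n eps l m x y) id C u' u"
proof -
  have "(\<lambda>a u' u. eval_xy x y (sym_gen_mat n eps l m a u' u)) = gen_mat n eps l m x y"
    using eval_sym_gen_mat[OF assms] by (simp add: fun_eq_iff)
  moreover have "(\<lambda>c. eval_xy x y [:[:c:]:]) = id"
    by (simp add: fun_eq_iff)
  ultimately show ?thesis
    by (simp add: comm_ring_hom.hom_comb_mat[OF comm_ring_hom_eval_xy])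
qed

lemma eval_sym_matrix:
  assumes "x \<noteq> 0" "y \<noteq> 0" "r < length (tensor_pairs n eps l m)" "j < length (tensor_pairs n eps l m)"
  shows "eval_xy x y (sym_matrix n eps l m $$ (r, j)) = comb_mat (tensor_basis n eps l m) (gen_mat n eps l m x y) id
    (unit_comb n eps l m (tensor_pairs n eps l m ! j)) (fst (tensor_pairs n eps l m ! r)) (snd (tensor_pairs n eps l m ! r))"
  using assms by (simp add: sym_matrix_def Let_def eval_comb_mat)

lemma preserves_unit_comb:
  assumes "2 \<le> n" "invariant_subspace (tensor_basis n eps l m) (tensor_gens n eps l m x y) S"
    and "j < length (tensor_pairs n eps l m)"
  shows "preserves (tensor_basis n eps l m) S
    (comb_mat (tensor_basis n eps l m) (gen_mat n eps l m x y) id (unit_comb n eps l m (tensor_pairs n eps l m ! j)))"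
proof (intro preserves_comb_mat[OF assms(2) finite_tensor_basis] preserves_gen_mat[OF assms(2)])
  fix w e a assume "(w, e) \<in> set (unit_comb n eps l m (tensor_pairs n eps l m ! j))" "a \<in> set w"
  then show "gen_index a < n"
    using graded_unit_comb[OF assms(1) tensor_pairs_nth[OF assms(3)]] by (fastforce simp: graded_comb_def)
qed

text \<open>Where the specialised matrix is invertible, the matrix units are linear combinations of the actions
  of the \<open>unit_comb \<tau>\<close>.\<close>

lemma matrix_unit_preserved:
  assumes n: "2 \<le> n" and x: "x \<noteq> 0" and y: "y \<noteq> 0"
    and P: "eval_xy x y (det (sym_matrix n eps l m)) \<noteq> 0"
    and inv: "invariant_subspace (tensor_basis n eps l m) (tensor_gens n eps l m x y) S"
    and t: "t \<in> tensor_basis n eps l m" "t' \<in> tensor_basis n eps l m"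
  shows "\<exists>Z. preserves (tensor_basis n eps l m) S Z \<and>
    (\<forall>u'\<in>tensor_basis n eps l m. \<forall>u\<in>tensor_basis n eps l m. Z u' u = mat_unit t' t u' u)"
proof -
  let ?B = "tensor_basis n eps l m" and ?ps = "tensor_pairs n eps l m"
  let ?k = "length ?ps" and ?Z = "\<lambda>j. comb_mat ?B (gen_mat n eps l m x y) id (unit_comb n eps l m (?ps ! j))"
  define A where "A = map_mat (eval_xy x y) (sym_matrix n eps l m)"
  have ps: "set ?ps = ?B \<times> ?B" "distinct ?ps"
    using pair_list[OF finite_tensor_basis] by blast+
  have A: "A \<in> carrier_mat ?k ?k" "det A \<noteq> 0"
    using P by (simp_all add: A_def sym_matrix_def Let_def comm_ring_hom.hom_det[OF comm_ring_hom_eval_xy])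
  have "(t', t) \<in> set ?ps"
    using ps(1) t by simp
  then obtain j0 where j0: "j0 < ?k" "?ps ! j0 = (t', t)"
    unfolding in_set_conv_nth by blast
  obtain c where c: "\<forall>r<?k. (\<Sum>j<?k. A $$ (r, j) * c j) = of_bool (r = j0)"
    using solve_unit_vector[OF A j0(1)] by blast
  have "preserves ?B S (\<lambda>u' u. \<Sum>j<?k. c j * ?Z j u' u)"
    using preserves_unit_comb[OF n inv]
    by (intro preserves_sum[OF inv finite_tensor_basis] preserves_scale[OF inv finite_tensor_basis]) simp_all
  moreover have "(\<Sum>j<?k. c j * ?Z j u' u) = mat_unit t' t u' u" if "u' \<in> ?B" "u \<in> ?B" for u' u
  proof -
    have "(u', u) \<in> set ?ps"
      using ps(1) that by simp
    then obtain r where r: "r < ?k" "?ps ! r = (u', u)"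
      unfolding in_set_conv_nth by blast
    then have "(\<Sum>j<?k. c j * ?Z j u' u) = (\<Sum>j<?k. A $$ (r, j) * c j)"
      using A(1) eval_sym_matrix[OF x y r(1)] by (intro sum.cong refl) (simp add: A_def mult.commute)
    also have "\<dots> = of_bool (?ps ! r = ?ps ! j0)"
      using c r(1) j0(1) nth_eq_iff_index_eq[OF ps(2)] by simp
    finally show ?thesis
      using r(2) j0(2) by (simp add: mat_unit_def)
  qed
  ultimately show ?thesis
    by blast
qed

theorem irreducible_if_eval_det_nonzero:
  assumes n: "2 \<le> n" and ne: "tensor_basis n eps l m \<noteq> {}" and x: "x \<noteq> 0" and y: "y \<noteq> 0"
    and P: "eval_xy x y (det (sym_matrix n eps l m)) \<noteq> 0"
  shows "irreducible_mod (tensor_basis n eps l m) (tensor_gens n eps l m x y)"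
proof -
  obtain t where t: "t \<in> tensor_basis n eps l m"
    using ne by blast
  then have "(\<lambda>b. of_bool (b = t)) \<in> Vspace (tensor_basis n eps l m)" "(\<lambda>b. of_bool (b = t) :: K) \<noteq> (\<lambda>_. 0)"
    by (auto simp: Vspace_def fun_eq_iff)
  moreover have "S = {\<lambda>_. 0} \<or> S = Vspace (tensor_basis n eps l m)"
    if "invariant_subspace (tensor_basis n eps l m) (tensor_gens n eps l m x y) S" for S
    using invariant_subspace_trivial_if_units[OF that finite_tensor_basis]
      matrix_unit_preserved[OF n x y P that] by blast
  ultimately show ?thesis
    unfolding irreducible_mod_def by blast
qed

theorem corollary4p9:
  fixes n l m :: nat and eps :: "nat \<Rightarrow> bool"
  assumes "4 \<le> n" and "Wbasis n eps l \<noteq> {}" and "Wbasis n eps m \<noteq> {}"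
  shows "\<exists>P :: K poly poly. P \<noteq> 0 \<and>
    (\<forall>x y :: K. x \<noteq> 0 \<longrightarrow> y \<noteq> 0 \<longrightarrow> poly (map_poly (\<lambda>c. poly c x) P) y \<noteq> 0 \<longrightarrow>
       irreducible_mod (Wbasis n eps l \<times> Wbasis n eps m) (tensor_gens n eps l m x y))"
proof (intro exI conjI allI impI)
  have n: "2 \<le> n"
    using assms(1) by simp
  show "det (sym_matrix n eps l m) \<noteq> 0"
    by (rule det_sym_matrix_nonzero[OF n])
  fix x y :: K
  assume "x \<noteq> 0" "y \<noteq> 0" "poly (map_poly (\<lambda>c. poly c x) (det (sym_matrix n eps l m))) y \<noteq> 0"
  then show "irreducible_mod (Wbasis n eps l \<times> Wbasis n eps m) (tensor_gens n eps l m x y)"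
    using irreducible_if_eval_det_nonzero[OF n] assms(2,3) by (simp add: eval_xy_def)
qed

end
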